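(* Let $\rho\in\mathbb R$, let $\kappa_{\mathbf a}:\mathbb H_\rho\times\mathbb H_\rho\to\mathbb C$ be a positive semi-definite Dirichlet series kernel with coefficient matrix $\mathbf a=(a_{m,n})$, let $\mathscr H_{\mathbf a}$ be the associated reproducing kernel Hilbert space, and let $A_{n,\mathbf a}$, $n\ge1$, be the analytic symbols of $\mathbf a$. Then: (i) $\kappa_{\mathbf a}(s,u)=\sum_{n=1}^\infty A_{n,\mathbf a}(s)n^{-\bar u}$ for all $s,u\in\mathbb H_\rho$; (ii) every $f\in\mathscr H_{\mathbf a}$ is a Dirichlet series given by $f(s)=\sum_{n=1}^\infty\langle f,A_{n,\mathbf a}\rangle_{\mathscr H_{\mathbf a}}n^{-s}$, $s\in\mathbb H_\rho$; (iii) $\{A_{n,\mathbf a}\}_{n\ge1}$ is a total subset of $\mathscr H_{\mathbf a}$.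
   Context: $\mathbb H_\rho=\{s\in\mathbb C:\Re(s)>\rho\}$. A double Dirichlet series $\sum c_{m,n}m^{-s}n^{-u}$ is regularly convergent at $(s_0,u_0)$ if it converges there and, for all $m,n\ge1$, $\sum_m c_{m,n}m^{-s_0}$ and $\sum_n c_{m,n}n^{-u_0}$ converge. $\kappa_{\mathbf a}(s,u)=\sum_{m,n\ge1}a_{m,n}m^{-s}n^{-\bar u}$ is a Dirichlet series kernel on $\mathbb H_\rho$ if $(s,u)\mapsto\kappa_{\mathbf a}(s,\bar u)$ is regularly convergent on $\mathbb H_\rho\times\mathbb H_\rho$. Positive semi-definite means every finite matrix $(\kappa_{\mathbf a}(s_i,s_j))$ is positive semi-definite. $\mathscr H_{\mathbf a}$ is the Hilbert space of functions on $\mathbb H_\rho$ with $\kappa_{\mathbf a}(\cdot,t)\in\mathscr H_{\mathbf a}$ and $\langle f,\kappa_{\mathbf a}(\cdot,t)\rangle=f(t)$ for all $t$. Analytic symbols: $A_{n,\mathbf a}(s)=\sum_{m\ge1}a_{m,n}m^{-s}$; these belong to $\mathscr H_{\mathbf a}$. A subset is total if its closed linear span is the whole space. *)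

theory Defs
  imports "HOL-Analysis.Analysis"
begin

definition halfplane :: "real \<Rightarrow> complex set" where
  "halfplane \<rho> = {s. Re s > \<rho>}"

text \<open>Dirichlet term n^(-s) (used only for n >= 1).\<close>
definition dpow :: "nat \<Rightarrow> complex \<Rightarrow> complex" where
  "dpow n s = (of_nat n :: complex) powr (- s)"

definition dpsum :: "(nat \<Rightarrow> nat \<Rightarrow> complex) \<Rightarrow> complex \<Rightarrow> complex \<Rightarrow> nat \<times> nat \<Rightarrow> complex" where
  "dpsum c s u = (\<lambda>(M, N). \<Sum>m\<in>{1..M}. \<Sum>n\<in>{1..N}. c m n * dpow m s * dpow n u)"

definition double_converges :: "(nat \<Rightarrow> nat \<Rightarrow> complex) \<Rightarrow> complex \<Rightarrow> complex \<Rightarrow> bool" where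
  "double_converges c s u \<longleftrightarrow> (\<exists>L. (dpsum c s u \<longlongrightarrow> L) (sequentially \<times>\<^sub>F sequentially))"

definition double_sum :: "(nat \<Rightarrow> nat \<Rightarrow> complex) \<Rightarrow> complex \<Rightarrow> complex \<Rightarrow> complex" where
  "double_sum c s u = Lim (sequentially \<times>\<^sub>F sequentially) (dpsum c s u)"

definition regularly_convergent :: "(nat \<Rightarrow> nat \<Rightarrow> complex) \<Rightarrow> complex \<Rightarrow> complex \<Rightarrow> bool" where
  "regularly_convergent c s0 u0 \<longleftrightarrow>
     double_converges c s0 u0 \<and>
     (\<forall>n\<ge>1. summable (\<lambda>m. c (Suc m) n * dpow (Suc m) s0)) \<and>
     (\<forall>m\<ge>1. summable (\<lambda>n. c m (Suc n) * dpow (Suc n) u0))"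

definition dkernel :: "(nat \<Rightarrow> nat \<Rightarrow> complex) \<Rightarrow> complex \<Rightarrow> complex \<Rightarrow> complex" where
  "dkernel a s u = double_sum a s (cnj u)"

definition dirichlet_series_kernel :: "real \<Rightarrow> (nat \<Rightarrow> nat \<Rightarrow> complex) \<Rightarrow> bool" where
  "dirichlet_series_kernel \<rho> a \<longleftrightarrow>
     (\<forall>s\<in>halfplane \<rho>. \<forall>u\<in>halfplane \<rho>. regularly_convergent a s u)"

definition psd_kernel :: "complex set \<Rightarrow> (complex \<Rightarrow> complex \<Rightarrow> complex) \<Rightarrow> bool" where
  "psd_kernel D K \<longleftrightarrow>
     (\<forall>(k::nat) (p::nat \<Rightarrow> complex) (c::nat \<Rightarrow> complex). (\<forall>i<k. p i \<in> D) \<longrightarrow>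
        (let q = (\<Sum>i<k. \<Sum>j<k. cnj (c i) * K (p i) (p j) * c j) in Im q = 0 \<and> Re q \<ge> 0))"

definition analytic_symbol :: "(nat \<Rightarrow> nat \<Rightarrow> complex) \<Rightarrow> nat \<Rightarrow> complex \<Rightarrow> complex" where
  "analytic_symbol a n s = (\<Sum>m. a (Suc m) n * dpow (Suc m) s)"

text \<open>Functions on H_rho are represented as functions on complex vanishing outside H_rho.\<close>
definition restr :: "real \<Rightarrow> (complex \<Rightarrow> complex) \<Rightarrow> complex \<Rightarrow> complex" where
  "restr \<rho> f = (\<lambda>s. if s \<in> halfplane \<rho> then f s else 0)"

definition hnorm :: "((complex \<Rightarrow> complex) \<Rightarrow> (complex \<Rightarrow> complex) \<Rightarrow> complex) \<Rightarrow> (complex \<Rightarrow> complex) \<Rightarrow> real" where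
  "hnorm ip f = sqrt (Re (ip f f))"

definition hilbert_function_space :: "real \<Rightarrow> (complex \<Rightarrow> complex) set \<Rightarrow>
    ((complex \<Rightarrow> complex) \<Rightarrow> (complex \<Rightarrow> complex) \<Rightarrow> complex) \<Rightarrow> bool" where
  "hilbert_function_space \<rho> H ip \<longleftrightarrow>
     (\<forall>f\<in>H. \<forall>s. s \<notin> halfplane \<rho> \<longrightarrow> f s = 0) \<and>
     (\<lambda>s. 0) \<in> H \<and>
     (\<forall>f\<in>H. \<forall>g\<in>H. (\<lambda>s. f s + g s) \<in> H) \<and>
     (\<forall>f\<in>H. \<forall>c. (\<lambda>s. c * f s) \<in> H) \<and>
     (\<forall>f\<in>H. \<forall>g\<in>H. \<forall>h\<in>H. ip (\<lambda>s. f s + g s) h = ip f h + ip g h) \<and>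
     (\<forall>f\<in>H. \<forall>g\<in>H. \<forall>c. ip (\<lambda>s. c * f s) g = c * ip f g) \<and>
     (\<forall>f\<in>H. \<forall>g\<in>H. ip g f = cnj (ip f g)) \<and>
     (\<forall>f\<in>H. Re (ip f f) \<ge> 0) \<and>
     (\<forall>f\<in>H. ip f f = 0 \<longrightarrow> f = (\<lambda>s. 0)) \<and>
     (\<forall>X::nat \<Rightarrow> complex \<Rightarrow> complex. (\<forall>k. X k \<in> H) \<longrightarrow>
        (\<forall>e>0. \<exists>N. \<forall>k\<ge>N. \<forall>l\<ge>N. hnorm ip (\<lambda>s. X k s - X l s) < e) \<longrightarrow>
        (\<exists>f\<in>H. (\<lambda>k. hnorm ip (\<lambda>s. X k s - f s)) \<longlonglongrightarrow> 0))"

definition is_rkhs :: "real \<Rightarrow> (complex \<Rightarrow> complex \<Rightarrow> complex) \<Rightarrow> (complex \<Rightarrow> complex) set \<Rightarrow>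
    ((complex \<Rightarrow> complex) \<Rightarrow> (complex \<Rightarrow> complex) \<Rightarrow> complex) \<Rightarrow> bool" where
  "is_rkhs \<rho> K H ip \<longleftrightarrow> hilbert_function_space \<rho> H ip \<and>
     (\<forall>t\<in>halfplane \<rho>. restr \<rho> (\<lambda>s. K s t) \<in> H \<and>
        (\<forall>f\<in>H. ip f (restr \<rho> (\<lambda>s. K s t)) = f t))"

text \<open>A family (B n)_{n>=1} in H is total: its closed linear span is H, i.e. every
  element of H is a norm limit of finite linear combinations.\<close>
definition total_family :: "(complex \<Rightarrow> complex) set \<Rightarrow>
    ((complex \<Rightarrow> complex) \<Rightarrow> (complex \<Rightarrow> complex) \<Rightarrow> complex) \<Rightarrow> (nat \<Rightarrow> complex \<Rightarrow> complex) \<Rightarrow> bool" where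
  "total_family H ip B \<longleftrightarrow> (\<forall>n\<ge>1. B n \<in> H) \<and>
     (\<forall>f\<in>H. \<forall>e>0. \<exists>N (c::nat \<Rightarrow> complex).
        hnorm ip (\<lambda>s. f s - (\<Sum>n\<in>{1..N}. c n * B n s)) < e)"

end

theory Submission
  imports Defs
begin

(* Part (i) is the double series sum a(m,n) m^-s n^-conj(u) summed over m first, which regular
   convergence permits.  The heart of the matter is that every analytic symbol A_n lies in H with
   <A_l, A_n> = a(n,l).  This goes by induction on n: for real t the functions
   X_t = n^t (K_t - sum_{l<n} l^-t A_l) lie in H by the induction hypothesis, and by (i)
   X_t = n^t sum_{k>=n} A_k k^-t, which tends to A_n pointwise as t -> oo.  Their inner products
   n^(s+t) sum_{m,k>=n} a(m,k) m^-t k^-s tend to a(n,n) as s, t -> oo (extraction of the leading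
   coefficient of a Dirichlet series via Tannery's theorem), so X_t is a Cauchy net whose limit
   must be A_n.  Next, the partial sums sum_{n<=N} n^-conj(s) A_n converge in norm to K_s, because
   their Gram numbers are the diagonal partial sums of the double series for kappa(s,s); pairing
   with f gives (ii).  By (ii) only 0 is orthogonal to all A_n, and a best-approximation argument
   with a minimizing sequence turns this into the density of their span, which is (iii). *)

section \<open>Dirichlet series in a real variable\<close>

lemma dpow_of_real: "dpow m (of_real t) = of_real (real m powr (-t))"
  unfolding dpow_def by (metis of_real_minus of_real_of_nat_eq powr_of_real of_nat_0_le_iff)

lemma cnj_dpow: "cnj (dpow m s) = dpow m (cnj s)"
  unfolding dpow_def by (subst cnj_powr) auto

lemma norm_dpow: "norm (dpow m s) = real m powr (- Re s)"
  unfolding dpow_def by (subst norm_powr_real_powr) auto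

lemma cnj_dpow_of_real [simp]: "cnj (dpow m (of_real t)) = dpow m (of_real t)"
  by (simp add: dpow_of_real)

definition dirichlet_series :: "(nat \<Rightarrow> complex) \<Rightarrow> complex \<Rightarrow> complex" where
  "dirichlet_series d s = (\<Sum>m. d (Suc m) * dpow (Suc m) s)"

definition coeff_tail :: "nat \<Rightarrow> (nat \<Rightarrow> 'a::zero) \<Rightarrow> nat \<Rightarrow> 'a" where
  "coeff_tail n d m = (if m < n then 0 else d m)"

lemma coeff_tail_mult:
  fixes d e :: "nat \<Rightarrow> 'a::mult_zero"
  shows "coeff_tail n (\<lambda>m. d m * e m) m = coeff_tail n d m * e m"
  by (simp add: coeff_tail_def)

lemma sums_coeff_tail:
  fixes f :: "nat \<Rightarrow> 'a::real_normed_vector"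
  assumes "(\<lambda>k. f (Suc k)) sums S"
  shows "(\<lambda>k. coeff_tail n f (Suc k)) sums (S - (\<Sum>l\<in>{1..<n}. f l))"
proof -
  have "(\<lambda>k. if Suc k < n then f (Suc k) else 0) sums (\<Sum>k\<in>{k. Suc k < n}. f (Suc k))"
    by (rule sums_If_finite, rule finite_subset[of _ "{..<n}"]) auto
  also have "(\<Sum>k\<in>{k. Suc k < n}. f (Suc k)) = (\<Sum>l\<in>{1..<n}. f l)"
    by (rule sum.reindex_bij_witness[of _ "\<lambda>l. l - 1" Suc]) auto
  finally have head: "(\<lambda>k. if Suc k < n then f (Suc k) else 0) sums (\<Sum>l\<in>{1..<n}. f l)" .
  have "(\<lambda>k. coeff_tail n f (Suc k)) = (\<lambda>k. f (Suc k) - (if Suc k < n then f (Suc k) else 0))"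
    by (auto simp: coeff_tail_def)
  thus ?thesis using sums_diff[OF assms head] by simp
qed

lemma summable_imp_coeff_bound:
  assumes "summable (\<lambda>m. d (Suc m) * dpow (Suc m) (of_real \<sigma>))"
  shows "\<exists>B. \<forall>m\<ge>1. norm (d m) \<le> B * real m powr \<sigma>"
proof -
  obtain B where B: "\<And>k. norm (d (Suc k) * dpow (Suc k) (of_real \<sigma>)) \<le> B"
    using summable_imp_Bseq[OF assms] by (auto simp: Bseq_def)
  have "norm (d m) \<le> B * real m powr \<sigma>" if "m \<ge> 1" for m
  proof -
    obtain k where k: "m = Suc k" using \<open>m \<ge> 1\<close> by (cases m) auto
    have "norm (d m) = norm (d m) * real m powr (-\<sigma>) * real m powr \<sigma>"
      using k by (simp add: mult.assoc flip: powr_add)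
    also have "\<dots> \<le> B * real m powr \<sigma>"
      using B[of k] by (intro mult_right_mono) (simp_all add: k norm_mult norm_dpow)
    finally show ?thesis .
  qed
  thus ?thesis by blast
qed

lemma tendsto_powr_at_top_0:
  fixes q :: real
  assumes "0 < q" "q < 1"
  shows "((\<lambda>t. q powr t) \<longlongrightarrow> 0) at_top"
proof -
  have "LIM t at_top. ln q * t :> at_bot"
    using assms by (intro filterlim_tendsto_neg_mult_at_bot[OF tendsto_const _ filterlim_ident]) simp
  hence "((\<lambda>t. exp (ln q * t)) \<longlongrightarrow> 0) at_top"
    by (rule filterlim_compose[OF exp_at_bot])
  thus ?thesis using assms by (simp add: powr_def mult.commute)
qed

lemma summable_Suc_powr_minus_2: "summable (\<lambda>k. real (Suc k) powr (-2))"
  using summable_real_powr_iff[of "-2"] by (subst summable_Suc_iff) simp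

lemma dirichlet_term_estimate:
  assumes B: "\<And>m. m \<ge> 1 \<Longrightarrow> norm (d m) \<le> B * real m powr r" and n: "n \<ge> 1"
    and tail: "\<And>m. m < n \<Longrightarrow> d m = 0" and t: "t \<ge> r + 2"
  shows "norm (of_real (real n powr t) * (d (Suc k) * dpow (Suc k) (of_real t)))
           \<le> B * real n powr (r + 2) * real (Suc k) powr (-2)"
proof (cases "Suc k < n")
  case True
  have "B \<ge> 0" using B[of 1] by simp (meson norm_ge_zero order_trans)
  with True show ?thesis using tail[of "Suc k"] by simp
next
  case False
  define m where "m = real (Suc k)"
  define e where "e = t - r - 2"
  have "B \<ge> 0" using B[of 1] by simp (meson norm_ge_zero order_trans)
  have nm: "1 \<le> real n" "real n \<le> m" "e \<ge> 0" using False n t by (auto simp: m_def e_def)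
  have "n powr e * m powr (-e) \<le> 1"
    using nm powr_mono2[of e "real n" m] by (simp add: powr_minus divide_simps)
  have "norm (of_real (real n powr t) * (d (Suc k) * dpow (Suc k) (of_real t)))
      = real n powr t * norm (d (Suc k)) * m powr (-t)"
    by (simp add: norm_mult norm_dpow m_def)
  also have "\<dots> \<le> real n powr t * (B * m powr r) * m powr (-t)"
    using B[of "Suc k"] by (intro mult_right_mono mult_left_mono) (auto simp: m_def)
  also have "\<dots> = B * n powr (r + 2) * m powr (-2) * (n powr e * m powr (-e))"
    using nm by (simp add: e_def algebra_simps flip: powr_add)
  also have "\<dots> \<le> B * n powr (r + 2) * m powr (-2)"
    using \<open>n powr e * m powr (-e) \<le> 1\<close> \<open>B \<ge> 0\<close> by (intro mult_left_le) auto
  finally show ?thesis by (simp add: m_def)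
qed

lemma dirichlet_tail_bound:
  assumes B: "\<And>m. m \<ge> 1 \<Longrightarrow> norm (d m) \<le> B * real m powr r" and n: "n \<ge> 1"
    and tail: "\<And>m. m < n \<Longrightarrow> d m = 0" and t: "t \<ge> r + 2"
  shows "summable (\<lambda>m. d (Suc m) * dpow (Suc m) (of_real t))"
    and "norm (of_real (real n powr t) * dirichlet_series d (of_real t))
           \<le> B * real n powr (r + 2) * (\<Sum>k. real (Suc k) powr (-2))"
proof -
  let ?M = "\<lambda>k. B * real n powr (r + 2) * real (Suc k) powr (-2)"
  have M: "summable ?M" by (intro summable_mult summable_Suc_powr_minus_2)
  note est = dirichlet_term_estimate[OF B n tail t]
  have s: "summable (\<lambda>k. of_real (real n powr t) * (d (Suc k) * dpow (Suc k) (of_real t)))"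
    by (rule summable_comparison_test[OF _ M]) (use est in auto)
  thus "summable (\<lambda>m. d (Suc m) * dpow (Suc m) (of_real t))"
    using n by simp
  have "norm (of_real (real n powr t) * dirichlet_series d (of_real t))
      = norm (\<Sum>k. of_real (real n powr t) * (d (Suc k) * dpow (Suc k) (of_real t)))"
    unfolding dirichlet_series_def by (subst suminf_mult) (use s n in auto)
  also have "\<dots> \<le> (\<Sum>k. ?M k)" by (rule norm_suminf_le[OF est M])
  also have "\<dots> = B * real n powr (r + 2) * (\<Sum>k. real (Suc k) powr (-2))"
    by (rule suminf_mult[OF summable_Suc_powr_minus_2])
  finally show "norm (of_real (real n powr t) * dirichlet_series d (of_real t))
      \<le> B * real n powr (r + 2) * (\<Sum>k. real (Suc k) powr (-2))" .
qed

lemma dirichlet_scaled_term_tendsto: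
  fixes d :: "'p \<Rightarrow> nat \<Rightarrow> complex" and t :: "'p \<Rightarrow> real"
  assumes n: "n \<ge> 1"
    and bound: "eventually (\<lambda>p. \<forall>m\<ge>1. norm (d p m) \<le> B * real m powr r) F"
    and tail: "\<And>p m. m < n \<Longrightarrow> d p m = 0"
    and lead: "((\<lambda>p. d p n) \<longlongrightarrow> L) F"
    and t: "filterlim t at_top F"
  shows "((\<lambda>p. of_real (real n powr t p) * (d p m * dpow m (of_real (t p))))
           \<longlongrightarrow> (if m = n then L else 0)) F"
proof (cases "m \<le> n")
  case True
  show ?thesis
  proof (cases "m = n")
    case True
    have eq: "of_real (real n powr t p) * (d p n * dpow n (of_real (t p))) = d p n" for p
      using n by (simp add: dpow_of_real mult_ac flip: of_real_mult powr_add)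
    show ?thesis unfolding True if_P[OF refl] eq by (rule lead)
  qed (use True tail in simp)
next
  case False
  define q where "q = real n / real m"
  have q: "0 < q" "q < 1" using False n by (auto simp: q_def)
  have "((\<lambda>p. of_real (real n powr t p) * (d p m * dpow m (of_real (t p)))) \<longlongrightarrow> 0) F"
  proof (rule Lim_null_comparison)
    show "eventually (\<lambda>p. norm (of_real (real n powr t p) * (d p m * dpow m (of_real (t p))))
        \<le> q powr t p * (B * real m powr r)) F"
      using bound
    proof eventually_elim
      case (elim p)
      have eq: "of_real (real n powr t p) * (d p m * dpow m (of_real (t p))) = of_real (q powr t p) * d p m"
        using n False by (simp add: q_def dpow_of_real powr_divide powr_minus divide_simps)
      show ?case unfolding eq using elim False n by (auto simp: norm_mult intro!: mult_left_mono)
    qed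
    show "((\<lambda>p. q powr t p * (B * real m powr r)) \<longlongrightarrow> 0) F"
      using filterlim_compose[OF tendsto_powr_at_top_0[OF q] t] by (intro tendsto_mult_left_zero) simp
  qed
  thus ?thesis using False by simp
qed

text \<open>Tannery's theorem interchanges the limit with the summation.\<close>

lemma dirichlet_leading_coeff_tendsto:
  fixes d :: "'p \<Rightarrow> nat \<Rightarrow> complex" and t :: "'p \<Rightarrow> real"
  assumes F: "F \<noteq> bot" and n: "n \<ge> 1"
    and bound: "eventually (\<lambda>p. \<forall>m\<ge>1. norm (d p m) \<le> B * real m powr r) F"
    and tail: "\<And>p m. m < n \<Longrightarrow> d p m = 0"
    and lead: "((\<lambda>p. d p n) \<longlongrightarrow> L) F"
    and t: "filterlim t at_top F"
  shows "((\<lambda>p. of_real (real n powr t p) * dirichlet_series (d p) (of_real (t p))) \<longlongrightarrow> L) F"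
proof -
  define T where "T k p = of_real (real n powr t p) * (d p (Suc k) * dpow (Suc k) (of_real (t p)))" for k p
  have good: "eventually (\<lambda>p. (\<forall>m\<ge>1. norm (d p m) \<le> B * real m powr r) \<and> t p \<ge> r + 2) F"
    using bound filterlim_at_top[THEN iffD1, OF t, rule_format, of "r + 2"] by eventually_elim auto
  have est: "eventually (\<lambda>(k, p). norm (T k p) \<le> B * real n powr (r + 2) * real (Suc k) powr (-2))
      (at_top \<times>\<^sub>F F)"
    unfolding eventually_prod_filter
  proof (intro exI conjI allI impI)
    show "eventually (\<lambda>_. True) at_top" by simp
    show "eventually (\<lambda>p. (\<forall>m\<ge>1. norm (d p m) \<le> B * real m powr r) \<and> t p \<ge> r + 2) F"
      by (rule good)
  qed (auto simp: T_def simp del: of_nat_Suc intro: dirichlet_term_estimate[OF _ n tail])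
  have lim: "((\<lambda>p. T k p) \<longlongrightarrow> (if Suc k = n then L else 0)) F" for k
    unfolding T_def by (rule dirichlet_scaled_term_tendsto[OF n bound tail lead t])
  have "((\<lambda>p. \<Sum>k. T k p) \<longlongrightarrow> (\<Sum>k. if Suc k = n then L else 0)) F"
    using tannerys_theorem[OF lim est _ F] summable_Suc_powr_minus_2 by (auto intro: summable_mult)
  moreover have "(\<Sum>k. if Suc k = n then L else 0) = L"
  proof -
    have "(\<lambda>k. if Suc k = n then L else 0) = (\<lambda>k. if k = n - 1 then L else 0)"
      using n by (intro ext) auto
    thus ?thesis using sums_single[of "n - 1" "\<lambda>_. L"] by (simp add: sums_iff)
  qed
  moreover have "eventually (\<lambda>p. (\<Sum>k. T k p)
      = of_real (real n powr t p) * dirichlet_series (d p) (of_real (t p))) F"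
    using good
  proof eventually_elim
    case (elim p)
    have "summable (\<lambda>m. d p (Suc m) * dpow (Suc m) (of_real (t p)))"
      using elim by (intro dirichlet_tail_bound(1)[OF _ n tail]) auto
    thus ?case unfolding T_def dirichlet_series_def by (rule suminf_mult)
  qed
  ultimately show ?thesis by (simp add: tendsto_cong)
qed

lemma dirichlet_coeffs_unique:
  assumes "\<And>t. t \<ge> \<sigma> \<Longrightarrow> (\<lambda>m. b (Suc m) * dpow (Suc m) (of_real t)) sums S t"
      and "\<And>t. t \<ge> \<sigma> \<Longrightarrow> (\<lambda>m. b' (Suc m) * dpow (Suc m) (of_real t)) sums S t"
      and "m \<ge> 1"
  shows "b m = b' m"
proof -
  define d where "d m = (if m = 0 then 0 else b m - b' m)" for m
  have zero: "(\<lambda>m. d (Suc m) * dpow (Suc m) (of_real t)) sums 0" if "t \<ge> \<sigma>" for t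
    using sums_diff[OF assms(1,2)[OF that]] by (simp add: d_def algebra_simps)
  obtain B where B: "\<forall>m\<ge>1. norm (d m) \<le> B * real m powr \<sigma>"
    using summable_imp_coeff_bound zero[of \<sigma>] by (metis order_refl sums_summable)
  have d0: "d n = 0" for n
  proof (induction n rule: less_induct)
    case (less n)
    show ?case
    proof (cases "n = 0")
      case False
      have "((\<lambda>t. of_real (real n powr t) * dirichlet_series d (of_real t)) \<longlongrightarrow> d n) at_top"
        by (rule dirichlet_leading_coeff_tendsto[OF _ _ _ _ _ filterlim_ident])
           (use B False less.IH in auto)
      moreover have "eventually (\<lambda>t. of_real (real n powr t) * dirichlet_series d (of_real t) = 0) at_top"
        using eventually_ge_at_top[of \<sigma>]
        by eventually_elim (use zero in \<open>auto simp: dirichlet_series_def sums_iff\<close>)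
      ultimately show ?thesis
        by (metis tendsto_eventually tendsto_unique trivial_limit_at_top_linorder)
    qed (simp add: d_def)
  qed
  show ?thesis using d0[of m] \<open>m \<ge> 1\<close> by (simp add: d_def split: if_splits)
qed

section \<open>Double series\<close>

lemma tendsto_iterated_of_prod_filter:
  fixes f :: "'a \<times> 'b \<Rightarrow> 'c::metric_space"
  assumes lim: "(f \<longlongrightarrow> L) (A \<times>\<^sub>F B)" and inner: "\<And>x. ((\<lambda>y. f (x, y)) \<longlongrightarrow> g x) B"
    and B: "B \<noteq> bot"
  shows "(g \<longlongrightarrow> L) A"
proof (rule tendstoI)
  fix e :: real assume "e > 0"
  then obtain P Q where P: "eventually P A" and Q: "eventually Q B"
    and PQ: "\<And>x y. P x \<Longrightarrow> Q y \<Longrightarrow> dist (f (x, y)) L < e / 2"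
    using tendstoD[OF lim, of "e / 2"] unfolding eventually_prod_filter by force
  show "eventually (\<lambda>x. dist (g x) L < e) A"
    using P
  proof eventually_elim
    case (elim x)
    have "eventually (\<lambda>y. dist (f (x, y)) L \<le> e / 2) B"
      using Q by (rule eventually_mono) (use PQ[OF elim] in fastforce)
    hence "dist (g x) L \<le> e / 2"
      by (intro tendsto_le[OF B tendsto_const tendsto_dist[OF inner tendsto_const]])
    thus ?case using \<open>e > 0\<close> by simp
  qed
qed

lemma tendsto_iterated_of_prod_filter':
  fixes f :: "'a \<times> 'b \<Rightarrow> 'c::metric_space"
  assumes lim: "(f \<longlongrightarrow> L) (A \<times>\<^sub>F B)" and inner: "\<And>y. ((\<lambda>x. f (x, y)) \<longlongrightarrow> g y) A"
    and A: "A \<noteq> bot"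
  shows "(g \<longlongrightarrow> L) B"
proof (rule tendsto_iterated_of_prod_filter[of "\<lambda>(y, x). f (x, y)"])
  show "((\<lambda>(y, x). f (x, y)) \<longlongrightarrow> L) (B \<times>\<^sub>F A)"
    using lim unfolding prod_filter_commute[of A B] filterlim_filtermap
    by (simp add: case_prod_unfold prod.swap_def)
qed (use inner A in auto)

lemma double_sum_tendsto:
  "double_converges c s u \<Longrightarrow> (dpsum c s u \<longlongrightarrow> double_sum c s u) (sequentially \<times>\<^sub>F sequentially)"
  unfolding double_converges_def double_sum_def
  by (metis prod_filter_eq_bot tendsto_Lim trivial_limit_sequentially)

lemma dpsum_eq: "dpsum c s u (M, N) = (\<Sum>m<M. \<Sum>n<N. c (Suc m) (Suc n) * dpow (Suc m) s * dpow (Suc n) u)"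
  by (simp add: dpsum_def sum.atLeast1_atMost_eq)

lemma sums_double_sum_summing_m_first:
  assumes "regularly_convergent c s u"
  shows "(\<lambda>n. (\<Sum>m. c (Suc m) (Suc n) * dpow (Suc m) s) * dpow (Suc n) u) sums double_sum c s u"
  unfolding sums_def
proof (rule tendsto_iterated_of_prod_filter'[OF double_sum_tendsto])
  fix N
  have "(\<lambda>M. dpsum c s u (M, N)) = (\<lambda>M. \<Sum>n<N. (\<Sum>m<M. c (Suc m) (Suc n) * dpow (Suc m) s) * dpow (Suc n) u)"
    unfolding dpsum_eq sum_distrib_right by (rule ext, rule sum.swap)
  thus "(\<lambda>M. dpsum c s u (M, N)) \<longlonglongrightarrow> (\<Sum>n<N. (\<Sum>m. c (Suc m) (Suc n) * dpow (Suc m) s) * dpow (Suc n) u)"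
    using assms by (simp only:) (intro tendsto_intros summable_LIMSEQ, auto simp: regularly_convergent_def)
qed (use assms in \<open>auto simp: regularly_convergent_def\<close>)

lemma sums_double_sum_summing_n_first:
  assumes "regularly_convergent c s u"
  shows "(\<lambda>m. (\<Sum>n. c (Suc m) (Suc n) * dpow (Suc n) u) * dpow (Suc m) s) sums double_sum c s u"
  unfolding sums_def
proof (rule tendsto_iterated_of_prod_filter[OF double_sum_tendsto])
  fix M
  have "(\<lambda>N. dpsum c s u (M, N)) = (\<lambda>N. \<Sum>m<M. (\<Sum>n<N. c (Suc m) (Suc n) * dpow (Suc n) u) * dpow (Suc m) s)"
    unfolding dpsum_eq sum_distrib_right by (simp add: mult_ac)
  thus "(\<lambda>N. dpsum c s u (M, N)) \<longlonglongrightarrow> (\<Sum>m<M. (\<Sum>n. c (Suc m) (Suc n) * dpow (Suc n) u) * dpow (Suc m) s)"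
    using assms by (simp only:) (intro tendsto_intros summable_LIMSEQ, auto simp: regularly_convergent_def)
qed (use assms in \<open>auto simp: regularly_convergent_def\<close>)

lemma double_series_terms_bounded:
  fixes t :: "nat \<Rightarrow> nat \<Rightarrow> 'a::real_normed_vector"
  assumes lim: "((\<lambda>(M, N). \<Sum>m<M. \<Sum>n<N. t m n) \<longlongrightarrow> L) (sequentially \<times>\<^sub>F sequentially)"
    and rows: "\<And>m. \<exists>b. \<forall>n. norm (t m n) \<le> b" and cols: "\<And>n. \<exists>b. \<forall>m. norm (t m n) \<le> b"
  shows "\<exists>B. \<forall>m n. norm (t m n) \<le> B"
proof -
  define S where "S M N = (\<Sum>m<M. \<Sum>n<N. t m n)" for M N
  obtain N0 where N0: "\<And>M N. M \<ge> N0 \<Longrightarrow> N \<ge> N0 \<Longrightarrow> norm (S M N - L) < 1"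
    using tendstoD[OF lim, of 1] by (auto simp: eventually_prod_sequentially S_def dist_norm)
  obtain bf where bf: "\<And>m n. norm (t m n) \<le> bf m" using rows by metis
  obtain bg where bg: "\<And>m n. norm (t m n) \<le> bg n" using cols by metis
  define B where "B = 4 + (\<Sum>i<N0. \<bar>bf i\<bar>) + (\<Sum>i<N0. \<bar>bg i\<bar>)"
  have sums_nonneg: "(\<Sum>i<N0. \<bar>bf i\<bar>) \<ge> 0" "(\<Sum>i<N0. \<bar>bg i\<bar>) \<ge> 0"
    by (auto intro: sum_nonneg)
  have "norm (t m n) \<le> B" for m n
  proof (cases "m < N0 \<or> n < N0")
    case True
    have "bf m \<le> (\<Sum>i<N0. \<bar>bf i\<bar>)" if "m < N0"
      using member_le_sum[of m "{..<N0}" "\<lambda>i. \<bar>bf i\<bar>"] that by auto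
    moreover have "bg n \<le> (\<Sum>i<N0. \<bar>bg i\<bar>)" if "n < N0"
      using member_le_sum[of n "{..<N0}" "\<lambda>i. \<bar>bg i\<bar>"] that by auto
    ultimately show ?thesis
      using True bf[of m n] bg[of m n] sums_nonneg unfolding B_def by linarith
  next
    case False
    have four: "norm (w - x - y + z) \<le> norm w + norm x + norm y + norm z" for w x y z :: 'a
      using norm_triangle_ineq[of "w - x - y" z] norm_triangle_ineq4[of "w - x" y]
        norm_triangle_ineq4[of w x] by linarith
    have row_step: "S (Suc M) N = S M N + (\<Sum>n<N. t M n)" for M N
      by (simp add: S_def)
    have "t m n = (S (Suc m) (Suc n) - L) - (S m (Suc n) - L) - (S (Suc m) n - L) + (S m n - L)"
      unfolding row_step by (simp add: algebra_simps)
    also have "norm \<dots> \<le> 4"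
    proof -
      have "norm (S (Suc m) (Suc n) - L) < 1" "norm (S m (Suc n) - L) < 1"
        "norm (S (Suc m) n - L) < 1" "norm (S m n - L) < 1"
        using False by (auto intro!: N0)
      thus ?thesis using four[of "S (Suc m) (Suc n) - L" "S m (Suc n) - L" "S (Suc m) n - L" "S m n - L"]
        by linarith
    qed
    finally show ?thesis using sums_nonneg unfolding B_def by linarith
  qed
  thus ?thesis by blast
qed

lemma regularly_convergent_terms_bounded:
  assumes rc: "regularly_convergent c s u"
  shows "\<exists>B. \<forall>m n. norm (c (Suc m) (Suc n) * dpow (Suc m) s * dpow (Suc n) u) \<le> B"
proof (rule double_series_terms_bounded)
  have "dpsum c s u = (\<lambda>(M, N). \<Sum>m<M. \<Sum>n<N. c (Suc m) (Suc n) * dpow (Suc m) s * dpow (Suc n) u)"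
    by (simp add: fun_eq_iff dpsum_eq)
  thus "((\<lambda>(M, N). \<Sum>m<M. \<Sum>n<N. c (Suc m) (Suc n) * dpow (Suc m) s * dpow (Suc n) u)
      \<longlongrightarrow> double_sum c s u) (sequentially \<times>\<^sub>F sequentially)"
    using rc double_sum_tendsto[of c s u] unfolding regularly_convergent_def by simp
next
  fix m
  have "summable (\<lambda>n. c (Suc m) (Suc n) * dpow (Suc n) u)"
    using rc by (simp add: regularly_convergent_def)
  then obtain b where b: "\<And>n. norm (c (Suc m) (Suc n) * dpow (Suc n) u) \<le> b"
    using summable_imp_Bseq by (auto simp: Bseq_def)
  have "norm (c (Suc m) (Suc n) * dpow (Suc m) s * dpow (Suc n) u) \<le> norm (dpow (Suc m) s) * b" for n
    using mult_left_mono[OF b[of n], of "norm (dpow (Suc m) s)"] by (simp add: norm_mult mult_ac)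
  thus "\<exists>b. \<forall>n. norm (c (Suc m) (Suc n) * dpow (Suc m) s * dpow (Suc n) u) \<le> b" by blast
next
  fix n
  have "summable (\<lambda>m. c (Suc m) (Suc n) * dpow (Suc m) s)"
    using rc by (simp add: regularly_convergent_def)
  then obtain b where b: "\<And>m. norm (c (Suc m) (Suc n) * dpow (Suc m) s) \<le> b"
    using summable_imp_Bseq by (auto simp: Bseq_def)
  have "norm (c (Suc m) (Suc n) * dpow (Suc m) s * dpow (Suc n) u) \<le> b * norm (dpow (Suc n) u)" for m
    using mult_right_mono[OF b[of m], of "norm (dpow (Suc n) u)"] by (simp add: norm_mult)
  thus "\<exists>b. \<forall>m. norm (c (Suc m) (Suc n) * dpow (Suc m) s * dpow (Suc n) u) \<le> b" by blast
qed

lemma regularly_convergent_coeff_bound: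
  assumes "regularly_convergent c (of_real \<sigma>) (of_real \<tau>)"
  shows "\<exists>B. \<forall>m\<ge>1. \<forall>k\<ge>1. norm (c m k) \<le> B * real m powr \<sigma> * real k powr \<tau>"
proof -
  obtain B where B: "\<And>m k. norm (c (Suc m) (Suc k) * dpow (Suc m) (of_real \<sigma>) * dpow (Suc k) (of_real \<tau>)) \<le> B"
    using regularly_convergent_terms_bounded[OF assms] by blast
  have "norm (c m k) \<le> B * real m powr \<sigma> * real k powr \<tau>" if mk1: "m \<ge> 1" "k \<ge> 1" for m k
  proof -
    obtain m' k' where mk: "m = Suc m'" "k = Suc k'"
      using mk1 by (cases m; cases k) auto
    have "norm (c m k) = norm (c m k) * (real m powr (-\<sigma>) * real k powr (-\<tau>)) * (real m powr \<sigma> * real k powr \<tau>)"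
      using mk1 by (simp add: algebra_simps flip: powr_add)
    also have "\<dots> \<le> B * (real m powr \<sigma> * real k powr \<tau>)"
      using B[of m' k'] by (intro mult_right_mono) (simp_all add: mk norm_mult norm_dpow mult_ac)
    finally show ?thesis by (simp add: mult_ac)
  qed
  thus ?thesis by blast
qed

section \<open>Hilbert spaces of functions\<close>

locale hilbert_fun_space =
  fixes \<rho> :: real and H :: "(complex \<Rightarrow> complex) set"
    and ip :: "(complex \<Rightarrow> complex) \<Rightarrow> (complex \<Rightarrow> complex) \<Rightarrow> complex"
  assumes hilbert: "hilbert_function_space \<rho> H ip"
begin

lemma vanishes_outside: "f \<in> H \<Longrightarrow> s \<notin> halfplane \<rho> \<Longrightarrow> f s = 0"
  and zero_mem: "(\<lambda>s. 0) \<in> H"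
  and add_mem: "f \<in> H \<Longrightarrow> g \<in> H \<Longrightarrow> (\<lambda>s. f s + g s) \<in> H"
  and scale_mem: "f \<in> H \<Longrightarrow> (\<lambda>s. c * f s) \<in> H"
  and ip_add_left: "f \<in> H \<Longrightarrow> g \<in> H \<Longrightarrow> h \<in> H \<Longrightarrow> ip (\<lambda>s. f s + g s) h = ip f h + ip g h"
  and ip_scale_left: "f \<in> H \<Longrightarrow> g \<in> H \<Longrightarrow> ip (\<lambda>s. c * f s) g = c * ip f g"
  and ip_swap: "f \<in> H \<Longrightarrow> g \<in> H \<Longrightarrow> ip g f = cnj (ip f g)"
  and Re_ip_self_nonneg: "f \<in> H \<Longrightarrow> Re (ip f f) \<ge> 0"
  and ip_self_eq_0D: "f \<in> H \<Longrightarrow> ip f f = 0 \<Longrightarrow> f = (\<lambda>s. 0)"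
  and complete: "(\<And>k. X k \<in> H) \<Longrightarrow> (\<forall>e>0. \<exists>N. \<forall>k\<ge>N. \<forall>l\<ge>N. hnorm ip (\<lambda>s. X k s - X l s) < e) \<Longrightarrow>
        \<exists>f\<in>H. (\<lambda>k. hnorm ip (\<lambda>s. X k s - f s)) \<longlonglongrightarrow> 0"
  using hilbert unfolding hilbert_function_space_def by blast+

lemma diff_mem: "f \<in> H \<Longrightarrow> g \<in> H \<Longrightarrow> (\<lambda>s. f s - g s) \<in> H"
  using add_mem[OF _ scale_mem[of g "-1"], of f] by simp

lemma lincomb_mem: "finite I \<Longrightarrow> (\<And>i. i \<in> I \<Longrightarrow> g i \<in> H) \<Longrightarrow> (\<lambda>s. \<Sum>i\<in>I. c i * g i s) \<in> H"
proof (induction I rule: finite_induct)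
  case (insert x F)
  thus ?case using add_mem[OF scale_mem[of "g x" "c x"], of "\<lambda>s. \<Sum>i\<in>F. c i * g i s"] by simp
qed (simp add: zero_mem)

lemma ip_diff_left: "f \<in> H \<Longrightarrow> g \<in> H \<Longrightarrow> h \<in> H \<Longrightarrow> ip (\<lambda>s. f s - g s) h = ip f h - ip g h"
  using ip_add_left[OF _ scale_mem[of g "-1"], of f h] ip_scale_left[of g h "-1"] by simp

lemma ip_add_right: "f \<in> H \<Longrightarrow> g \<in> H \<Longrightarrow> h \<in> H \<Longrightarrow> ip h (\<lambda>s. f s + g s) = ip h f + ip h g"
  by (simp add: ip_swap[OF add_mem, of f g h] ip_add_left ip_swap[of _ h])

lemma ip_scale_right: "f \<in> H \<Longrightarrow> g \<in> H \<Longrightarrow> ip f (\<lambda>s. c * g s) = cnj c * ip f g"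
  using ip_swap[of "\<lambda>s. c * g s" f] by (simp add: scale_mem ip_scale_left ip_swap[of f g])

lemma ip_diff_right: "f \<in> H \<Longrightarrow> g \<in> H \<Longrightarrow> h \<in> H \<Longrightarrow> ip h (\<lambda>s. f s - g s) = ip h f - ip h g"
  by (simp add: ip_swap[OF diff_mem, of f g h] ip_diff_left ip_swap[of _ h])

lemma ip_zero_left: "h \<in> H \<Longrightarrow> ip (\<lambda>s. 0) h = 0"
  using ip_scale_left[OF zero_mem, of h 0] by simp

lemma ip_sum_left: "finite I \<Longrightarrow> (\<And>i. i \<in> I \<Longrightarrow> g i \<in> H) \<Longrightarrow> h \<in> H \<Longrightarrow>
    ip (\<lambda>s. \<Sum>i\<in>I. c i * g i s) h = (\<Sum>i\<in>I. c i * ip (g i) h)"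
proof (induction I rule: finite_induct)
  case (insert x F)
  thus ?case
    by (simp add: ip_add_left[OF scale_mem lincomb_mem] ip_scale_left)
qed (simp add: ip_zero_left)

lemma ip_sum_right: "finite I \<Longrightarrow> (\<And>i. i \<in> I \<Longrightarrow> g i \<in> H) \<Longrightarrow> h \<in> H \<Longrightarrow>
    ip h (\<lambda>s. \<Sum>i\<in>I. c i * g i s) = (\<Sum>i\<in>I. cnj (c i) * ip h (g i))"
  by (simp add: ip_swap[OF lincomb_mem] ip_sum_left ip_swap[of h])

lemma hnorm_nonneg: "f \<in> H \<Longrightarrow> hnorm ip f \<ge> 0"
  using Re_ip_self_nonneg by (simp add: hnorm_def)

lemma ip_self_eq_hnorm_sq: "f \<in> H \<Longrightarrow> ip f f = of_real (hnorm ip f ^ 2)"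
  using ip_swap[of f f] Re_ip_self_nonneg[of f] by (simp add: hnorm_def complex_eq_iff)

lemma ip_diff_scale_self: "f \<in> H \<Longrightarrow> g \<in> H \<Longrightarrow>
   ip (\<lambda>s. f s - t * g s) (\<lambda>s. f s - t * g s) = ip f f - cnj t * ip f g - t * ip g f + t * cnj t * ip g g"
  by (simp add: ip_diff_left ip_diff_right ip_scale_left ip_scale_right diff_mem scale_mem algebra_simps)

lemma cauchy_schwarz:
  assumes f: "f \<in> H" and g: "g \<in> H"
  shows "norm (ip f g) \<le> hnorm ip f * hnorm ip g"
proof (cases "hnorm ip g = 0")
  case True
  hence "g = (\<lambda>s. 0)" using g ip_self_eq_0D ip_self_eq_hnorm_sq by simp
  thus ?thesis using f ip_swap[OF zero_mem f] by (simp add: ip_zero_left hnorm_nonneg zero_mem)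
next
  case False
  define q where "q = hnorm ip g ^ 2"
  define p where "p = ip f g"
  have q: "q > 0" using False by (simp add: q_def)
  define t where "t = p / of_real q"
  have "ip (\<lambda>s. f s - t * g s) (\<lambda>s. f s - t * g s) = ip f f - cnj t * p - t * cnj p + t * cnj t * of_real q"
    unfolding ip_diff_scale_self[OF f g] ip_swap[OF f g] ip_self_eq_hnorm_sq[OF g] p_def q_def ..
  also have "\<dots> = ip f f - of_real (norm p ^ 2 / q)"
    using q by (simp add: t_def field_simps complex_norm_square[symmetric] mult.commute[of "cnj p"])
  finally have "ip (\<lambda>s. f s - t * g s) (\<lambda>s. f s - t * g s) = ip f f - of_real (norm p ^ 2 / q)" .
  hence "norm p ^ 2 / q \<le> hnorm ip f ^ 2"
    using Re_ip_self_nonneg[OF diff_mem[OF f scale_mem[OF g]], of t] ip_self_eq_hnorm_sq[OF f] by simp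
  hence "norm p ^ 2 \<le> (hnorm ip f * hnorm ip g) ^ 2"
    using q by (simp add: field_simps power_mult_distrib q_def)
  thus ?thesis unfolding p_def by (rule power2_le_imp_le) (simp add: hnorm_nonneg f g)
qed

lemma hnorm_diff:
  assumes "f \<in> H" "g \<in> H"
  shows "hnorm ip (\<lambda>s. f s - g s) = sqrt (Re (ip f f) - 2 * Re (ip f g) + Re (ip g g))"
  using assms ip_swap[of f g] by (simp add: hnorm_def ip_diff_left ip_diff_right diff_mem)

lemma hnorm_diff_commute: "f \<in> H \<Longrightarrow> g \<in> H \<Longrightarrow> hnorm ip (\<lambda>s. g s - f s) = hnorm ip (\<lambda>s. f s - g s)"
  using ip_swap[of f g] by (simp add: hnorm_diff)

lemma ip_tendsto_left:
  assumes X: "\<And>k. X k \<in> H" and g: "g \<in> H" and h: "h \<in> H"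
    and lim: "((\<lambda>k. hnorm ip (\<lambda>s. X k s - g s)) \<longlongrightarrow> 0) F"
  shows "((\<lambda>k. ip (X k) h) \<longlongrightarrow> ip g h) F"
proof (rule LIM_zero_cancel, rule Lim_null_comparison)
  show "eventually (\<lambda>k. norm (ip (X k) h - ip g h) \<le> hnorm ip (\<lambda>s. X k s - g s) * hnorm ip h) F"
    using cauchy_schwarz[OF diff_mem[OF X g] h] by (simp add: ip_diff_left[OF X g h])
  show "((\<lambda>k. hnorm ip (\<lambda>s. X k s - g s) * hnorm ip h) \<longlongrightarrow> 0) F"
    using tendsto_mult[OF lim tendsto_const] by simp
qed

lemma ip_tendsto_right:
  assumes X: "\<And>k. X k \<in> H" and g: "g \<in> H" and h: "h \<in> H"
    and lim: "((\<lambda>k. hnorm ip (\<lambda>s. X k s - g s)) \<longlongrightarrow> 0) F"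
  shows "((\<lambda>k. ip h (X k)) \<longlongrightarrow> ip h g) F"
  using tendsto_cnj[OF ip_tendsto_left[OF X g h lim]] by (simp add: ip_swap[OF _ h] X g)

lemma ip_self_tendsto:
  assumes X: "\<And>k. X k \<in> H" and g: "g \<in> H" and lim: "((\<lambda>k. hnorm ip (\<lambda>s. X k s - g s)) \<longlongrightarrow> 0) F"
  shows "((\<lambda>k. ip (X k) (X k)) \<longlongrightarrow> ip g g) F"
proof -
  have "ip (X k) (X k) = of_real (hnorm ip (\<lambda>s. X k s - g s) ^ 2) + ip g (X k) + ip (X k) g - ip g g" for k
  proof -
    have "of_real (hnorm ip (\<lambda>s. X k s - g s) ^ 2) = ip (X k) (X k) - ip (X k) g - (ip g (X k) - ip g g)"
      using X[of k] g ip_self_eq_hnorm_sq[OF diff_mem[OF X g], of k]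
      by (simp add: ip_diff_left ip_diff_right diff_mem)
    thus ?thesis by (simp add: algebra_simps)
  qed
  moreover have "((\<lambda>k. of_real (hnorm ip (\<lambda>s. X k s - g s) ^ 2) + ip g (X k) + ip (X k) g - ip g g)
      \<longlongrightarrow> of_real (0 ^ 2) + ip g g + ip g g - ip g g) F"
    by (intro tendsto_intros lim ip_tendsto_right[OF X g g lim] ip_tendsto_left[OF X g g lim])
  ultimately show ?thesis by simp
qed

lemma hnorm_diff_tendsto_0I:
  assumes X: "\<And>k. X k \<in> H" and g: "g \<in> H"
    and "((\<lambda>k. ip (X k) (X k)) \<longlongrightarrow> ip g g) F" and "((\<lambda>k. ip (X k) g) \<longlongrightarrow> ip g g) F"
  shows "((\<lambda>k. hnorm ip (\<lambda>s. X k s - g s)) \<longlongrightarrow> 0) F"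
proof -
  have "((\<lambda>k. sqrt (Re (ip (X k) (X k)) - 2 * Re (ip (X k) g) + Re (ip g g)))
      \<longlongrightarrow> sqrt (Re (ip g g) - 2 * Re (ip g g) + Re (ip g g))) F"
    by (intro tendsto_intros assms)
  thus ?thesis by (simp add: hnorm_diff X g)
qed

lemma convergent_if_hnorm_diff_tendsto_0:
  assumes X: "\<And>k. X k \<in> H"
    and cauchy: "((\<lambda>(i, j). hnorm ip (\<lambda>s. X i s - X j s)) \<longlongrightarrow> 0) (sequentially \<times>\<^sub>F sequentially)"
  shows "\<exists>g\<in>H. (\<lambda>k. hnorm ip (\<lambda>s. X k s - g s)) \<longlonglongrightarrow> 0"
proof (rule complete[OF X], intro allI impI)
  fix e :: real assume "e > 0"
  then obtain N where "\<forall>l\<ge>N. \<forall>k\<ge>N. \<bar>hnorm ip (\<lambda>s. X k s - X l s)\<bar> < e"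
    using tendstoD[OF cauchy \<open>e > 0\<close>] by (auto simp: eventually_prod_sequentially)
  thus "\<exists>N. \<forall>k\<ge>N. \<forall>l\<ge>N. hnorm ip (\<lambda>s. X k s - X l s) < e"
    by (fastforce simp: abs_less_iff)
qed

lemma convergent_if_gram_tendsto:
  assumes X: "\<And>k. X k \<in> H"
    and gram: "((\<lambda>(i, j). ip (X i) (X j)) \<longlongrightarrow> L) (sequentially \<times>\<^sub>F sequentially)"
  shows "\<exists>g\<in>H. (\<lambda>k. hnorm ip (\<lambda>s. X k s - g s)) \<longlonglongrightarrow> 0"
proof (rule convergent_if_hnorm_diff_tendsto_0[OF X])
  let ?F = "sequentially \<times>\<^sub>F sequentially :: (nat \<times> nat) filter"
  let ?G = "\<lambda>i j. ip (X i) (X j)"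
  have G: "((\<lambda>p. ?G (fst p) (snd p)) \<longlongrightarrow> L) ?F"
    using gram by (simp add: case_prod_beta')
  have diag: "((\<lambda>p. ?G (f p) (f p)) \<longlongrightarrow> L) ?F" if "filterlim f sequentially ?F" for f
    using filterlim_compose[OF gram filterlim_Pair[OF that that]] by simp
  have "((\<lambda>p. sqrt (Re (?G (fst p) (fst p)) - 2 * Re (?G (fst p) (snd p)) + Re (?G (snd p) (snd p))))
      \<longlongrightarrow> sqrt (Re L - 2 * Re L + Re L)) ?F"
    by (intro tendsto_intros diag G filterlim_fst filterlim_snd)
  moreover have "(\<lambda>(i, j). hnorm ip (\<lambda>s. X i s - X j s))
      = (\<lambda>p. sqrt (Re (?G (fst p) (fst p)) - 2 * Re (?G (fst p) (snd p)) + Re (?G (snd p) (snd p))))"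
    by (auto simp: hnorm_diff X)
  ultimately show "((\<lambda>(i, j). hnorm ip (\<lambda>s. X i s - X j s)) \<longlongrightarrow> 0) ?F" by simp
qed

lemma parallelogram: "f \<in> H \<Longrightarrow> g \<in> H \<Longrightarrow>
  ip (\<lambda>s. f s - g s) (\<lambda>s. f s - g s) + ip (\<lambda>s. f s + g s) (\<lambda>s. f s + g s) = 2 * ip f f + 2 * ip g g"
  by (simp add: ip_diff_left ip_diff_right ip_add_left ip_add_right diff_mem add_mem)

lemma orthogonal_if_minimal:
  assumes h: "h \<in> H" and u: "u \<in> H"
    and min: "\<And>t. Re (ip h h) \<le> Re (ip (\<lambda>s. h s - t * u s) (\<lambda>s. h s - t * u s))"
  shows "ip h u = 0"
proof -
  define p where "p = ip h u"
  define Q where "Q = hnorm ip u ^ 2"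
  define \<epsilon> where "\<epsilon> = 1 / (Q + 1)"
  have "Q \<ge> 0" by (simp add: Q_def)
  hence \<epsilon>: "\<epsilon> > 0" "\<epsilon> * Q \<le> 1" by (auto simp: \<epsilon>_def field_simps)
  have "ip (\<lambda>s. h s - (\<epsilon> * p) * u s) (\<lambda>s. h s - (\<epsilon> * p) * u s)
      = ip h h - cnj (\<epsilon> * p) * p - (\<epsilon> * p) * cnj p + (\<epsilon> * p) * cnj (\<epsilon> * p) * of_real Q"
    unfolding ip_diff_scale_self[OF h u] ip_swap[OF h u] ip_self_eq_hnorm_sq[OF u] p_def Q_def ..
  also have "\<dots> = ip h h - of_real \<epsilon> * (p * cnj p) * (2 - of_real (\<epsilon> * Q))"
    by (simp add: algebra_simps)
  also have "\<dots> = ip h h - of_real (\<epsilon> * norm p ^ 2) * (2 - of_real (\<epsilon> * Q))"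
    using complex_norm_square[of p] by simp
  finally have "ip (\<lambda>s. h s - (\<epsilon> * p) * u s) (\<lambda>s. h s - (\<epsilon> * p) * u s)
      = ip h h - of_real (\<epsilon> * norm p ^ 2) * (2 - of_real (\<epsilon> * Q))" .
  hence "\<epsilon> * norm p ^ 2 * (2 - \<epsilon> * Q) \<le> 0"
    using min[of "of_real \<epsilon> * p"] by simp
  moreover have "\<epsilon> * norm p ^ 2 * 1 \<le> \<epsilon> * norm p ^ 2 * (2 - \<epsilon> * Q)"
    using \<epsilon> by (intro mult_left_mono) auto
  ultimately have "\<epsilon> * norm p ^ 2 \<le> 0" by simp
  thus ?thesis using \<epsilon> by (simp add: p_def mult_le_0_iff)
qed

lemma minimizing_sequence_convergent:
  assumes S: "S \<subseteq> H"
    and comb: "\<And>g g' \<alpha> \<beta>. g \<in> S \<Longrightarrow> g' \<in> S \<Longrightarrow> (\<lambda>z. \<alpha> * g z + \<beta> * g' z) \<in> S"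
    and f: "f \<in> H" and G: "\<And>k. G k \<in> S"
    and lower: "\<And>g. g \<in> S \<Longrightarrow> \<delta> \<le> Re (ip (\<lambda>s. f s - g s) (\<lambda>s. f s - g s))"
    and upper: "\<And>k. Re (ip (\<lambda>s. f s - G k s) (\<lambda>s. f s - G k s)) \<le> \<delta> + inverse (real (Suc k))"
  shows "\<exists>g\<in>H. (\<lambda>k. hnorm ip (\<lambda>s. G k s - g s)) \<longlonglongrightarrow> 0"
proof (rule convergent_if_hnorm_diff_tendsto_0)
  define V where "V g = Re (ip (\<lambda>s. f s - g s) (\<lambda>s. f s - g s))" for g
  let ?F = "sequentially \<times>\<^sub>F sequentially :: (nat \<times> nat) filter"
  let ?b = "\<lambda>p. sqrt (2 * inverse (real (Suc (fst p))) + 2 * inverse (real (Suc (snd p))))"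
  have GH: "G k \<in> H" for k using G S by blast
  show "G k \<in> H" for k by (rule GH)
  have bound: "hnorm ip (\<lambda>s. G i s - G j s) \<le> ?b (i, j)" for i j
  proof -
    define w where "w = (\<lambda>s. f s - ((1/2) * G i s + (1/2) * G j s))"
    have "(\<lambda>s. (1/2) * G i s + (1/2) * G j s) \<in> S" by (rule comb[OF G G])
    hence wH: "w \<in> H" unfolding w_def using S by (intro diff_mem f) auto
    have e1: "(\<lambda>s. (f s - G j s) - (f s - G i s)) = (\<lambda>s. G i s - G j s)" by auto
    have e2: "(\<lambda>s. (f s - G j s) + (f s - G i s)) = (\<lambda>s. 2 * w s)"
      by (auto simp: w_def algebra_simps)
    have e3: "ip (\<lambda>s. 2 * w s) (\<lambda>s. 2 * w s) = 4 * ip w w"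
      using wH by (simp add: ip_scale_left ip_scale_right scale_mem)
    have "ip (\<lambda>s. G i s - G j s) (\<lambda>s. G i s - G j s) + 4 * ip w w
        = 2 * ip (\<lambda>s. f s - G j s) (\<lambda>s. f s - G j s) + 2 * ip (\<lambda>s. f s - G i s) (\<lambda>s. f s - G i s)"
      using parallelogram[OF diff_mem[OF f GH] diff_mem[OF f GH], of j i] unfolding e1 e2 e3 .
    from arg_cong[OF this, of Re]
    have "Re (ip (\<lambda>s. G i s - G j s) (\<lambda>s. G i s - G j s)) + 4 * Re (ip w w) = 2 * V (G j) + 2 * V (G i)"
      by (simp add: V_def)
    moreover have "\<delta> \<le> Re (ip w w)" unfolding w_def by (intro lower comb G)
    ultimately have "Re (ip (\<lambda>s. G i s - G j s) (\<lambda>s. G i s - G j s))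
        \<le> 2 * inverse (real (Suc i)) + 2 * inverse (real (Suc j))"
      using upper[of i] upper[of j] unfolding V_def by linarith
    thus ?thesis by (simp add: hnorm_def)
  qed
  have "(?b \<longlongrightarrow> sqrt (2 * 0 + 2 * 0)) ?F"
    by (intro tendsto_intros filterlim_compose[OF LIMSEQ_inverse_real_of_nat] filterlim_fst filterlim_snd)
  hence lim: "(?b \<longlongrightarrow> 0) ?F" by simp
  have le: "(\<lambda>(i, j). hnorm ip (\<lambda>s. G i s - G j s)) p \<le> ?b p" for p
    using bound[of "fst p" "snd p"] by (simp add: case_prod_beta)
  have ge: "0 \<le> (\<lambda>(i, j). hnorm ip (\<lambda>s. G i s - G j s)) p" for p
    by (simp add: case_prod_beta hnorm_nonneg diff_mem GH)
  show "((\<lambda>(i, j). hnorm ip (\<lambda>s. G i s - G j s)) \<longlongrightarrow> 0) ?F"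
    by (rule tendsto_sandwich[OF always_eventually always_eventually tendsto_const lim]) (use le ge in blast)+
qed

lemma minimizing_limit_residual:
  assumes S: "S \<subseteq> H"
    and comb: "\<And>g g' \<alpha> \<beta>. g \<in> S \<Longrightarrow> g' \<in> S \<Longrightarrow> (\<lambda>z. \<alpha> * g z + \<beta> * g' z) \<in> S"
    and f: "f \<in> H" and G: "\<And>k. G k \<in> S"
    and lower: "\<And>g. g \<in> S \<Longrightarrow> \<delta> \<le> Re (ip (\<lambda>s. f s - g s) (\<lambda>s. f s - g s))"
    and upper: "\<And>k. Re (ip (\<lambda>s. f s - G k s) (\<lambda>s. f s - G k s)) \<le> \<delta> + inverse (real (Suc k))"
    and g: "g \<in> H" and lim: "(\<lambda>k. hnorm ip (\<lambda>s. G k s - g s)) \<longlonglongrightarrow> 0"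
  shows "Re (ip (\<lambda>s. f s - g s) (\<lambda>s. f s - g s)) = \<delta>"
    and "\<forall>u\<in>S. ip (\<lambda>s. f s - g s) u = 0"
proof -
  define V where "V g = Re (ip (\<lambda>s. f s - g s) (\<lambda>s. f s - g s))" for g
  define h where "h = (\<lambda>s. f s - g s)"
  have hH: "h \<in> H" unfolding h_def by (rule diff_mem[OF f g])
  have GH: "G k \<in> H" for k using G S by blast
  have perturbed: "(\<lambda>k. V (\<lambda>z. 1 * G k z + t * u z)) \<longlonglongrightarrow> Re (ip (\<lambda>s. h s - t * u s) (\<lambda>s. h s - t * u s))"
    if u: "u \<in> H" for u t
    unfolding V_def
  proof (intro tendsto_Re ip_self_tendsto)
    show "(\<lambda>s. f s - (1 * G k s + t * u s)) \<in> H" for k by (intro diff_mem add_mem scale_mem f GH u)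
    show "(\<lambda>s. h s - t * u s) \<in> H" by (intro diff_mem scale_mem hH u)
    have "hnorm ip (\<lambda>s. (f s - (1 * G k s + t * u s)) - (h s - t * u s)) = hnorm ip (\<lambda>s. G k s - g s)" for k
      using hnorm_diff_commute[OF GH g, of k] by (simp add: h_def)
    thus "(\<lambda>k. hnorm ip (\<lambda>s. (f s - (1 * G k s + t * u s)) - (h s - t * u s))) \<longlonglongrightarrow> 0"
      using lim by simp
  qed
  have V\<delta>: "(\<lambda>k. V (G k)) \<longlonglongrightarrow> \<delta>"
  proof (rule tendsto_sandwich[OF always_eventually always_eventually tendsto_const])
    show "(\<lambda>k. \<delta> + inverse (real (Suc k))) \<longlonglongrightarrow> \<delta>"
      using tendsto_add[OF tendsto_const LIMSEQ_inverse_real_of_nat, of \<delta>] by simp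
  qed (use lower upper G in \<open>auto simp: V_def\<close>)
  have Vh: "(\<lambda>k. V (G k)) \<longlonglongrightarrow> Re (ip h h)"
    using perturbed[OF zero_mem, of 0] by simp
  have hh: "Re (ip h h) = \<delta>" using LIMSEQ_unique[OF Vh V\<delta>] .
  thus "Re (ip (\<lambda>s. f s - g s) (\<lambda>s. f s - g s)) = \<delta>" by (simp add: h_def)
  have "ip h u = 0" if u: "u \<in> S" for u
  proof (rule orthogonal_if_minimal[OF hH])
    show uH: "u \<in> H" using u S by blast
    show "Re (ip h h) \<le> Re (ip (\<lambda>s. h s - t * u s) (\<lambda>s. h s - t * u s))" for t
      unfolding hh
      by (rule tendsto_lowerbound[OF perturbed[OF uH] always_eventually])
         (intro allI, unfold V_def, rule lower, rule comb[OF G u], simp)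
  qed
  thus "\<forall>u\<in>S. ip (\<lambda>s. f s - g s) u = 0" by (simp add: h_def)
qed

lemma dense_if_orthogonal_complement_trivial:
  assumes S: "S \<subseteq> H" "(\<lambda>s. 0) \<in> S"
    and comb: "\<And>g g' \<alpha> \<beta>. g \<in> S \<Longrightarrow> g' \<in> S \<Longrightarrow> (\<lambda>z. \<alpha> * g z + \<beta> * g' z) \<in> S"
    and orth: "\<And>h. h \<in> H \<Longrightarrow> \<forall>u\<in>S. ip h u = 0 \<Longrightarrow> h = (\<lambda>s. 0)"
    and f: "f \<in> H" and e: "e > 0"
  shows "\<exists>g\<in>S. hnorm ip (\<lambda>s. f s - g s) < e"
proof -
  define V where "V g = Re (ip (\<lambda>s. f s - g s) (\<lambda>s. f s - g s))" for g
  define \<delta> where "\<delta> = Inf (V ` S)"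
  have V0: "0 \<le> V g" if "g \<in> S" for g
    using that S(1) by (auto simp: V_def intro!: Re_ip_self_nonneg diff_mem f)
  have lower: "\<delta> \<le> V g" if "g \<in> S" for g
    unfolding \<delta>_def by (rule cInf_lower) (use that V0 in \<open>auto intro: bdd_belowI[of _ 0]\<close>)
  have "\<exists>g\<in>S. V g < \<delta> + inverse (real (Suc k))" for k
  proof -
    have "Inf (V ` S) < \<delta> + inverse (real (Suc k))" by (simp add: \<delta>_def)
    from cInf_lessD[OF _ this] S(2) show ?thesis by blast
  qed
  hence "\<forall>k. \<exists>g. g \<in> S \<and> V g < \<delta> + inverse (real (Suc k))"
    unfolding Bex_def[symmetric] by (rule allI)
  then obtain G where "\<forall>k. G k \<in> S \<and> V (G k) < \<delta> + inverse (real (Suc k))"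
    by (rule exE[OF choice])
  hence G: "\<And>k. G k \<in> S" and upper: "\<And>k. V (G k) < \<delta> + inverse (real (Suc k))"
    by auto
  note minimizing = S(1) comb f G lower[unfolded V_def] less_imp_le[OF upper[unfolded V_def]]
  obtain g where g: "g \<in> H" and lim: "(\<lambda>k. hnorm ip (\<lambda>s. G k s - g s)) \<longlonglongrightarrow> 0"
    using minimizing_sequence_convergent[OF minimizing] by blast
  have residual_0: "(\<lambda>s. f s - g s) = (\<lambda>s. 0)"
    by (rule orth[OF diff_mem[OF f g] minimizing_limit_residual(2)[OF minimizing g lim]])
  have "Re (ip (\<lambda>s. f s - g s) (\<lambda>s. f s - g s)) = 0"
    unfolding residual_0 ip_zero_left[OF zero_mem] by simp
  hence "\<delta> = 0"
    using minimizing_limit_residual(1)[OF minimizing g lim] by linarith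
  obtain k where "inverse (real (Suc k)) < e\<^sup>2"
    using reals_Archimedean[of "e\<^sup>2"] e by auto
  hence "sqrt (V (G k)) < sqrt (e\<^sup>2)"
    using upper[of k] \<open>\<delta> = 0\<close> by (intro real_sqrt_less_mono) simp
  thus ?thesis using G[of k] e by (auto simp: hnorm_def V_def)
qed

end

section \<open>The reproducing kernel Hilbert space of a Dirichlet series kernel\<close>

lemma cnj_mem_halfplane_iff [simp]: "cnj u \<in> halfplane \<rho> \<longleftrightarrow> u \<in> halfplane \<rho>"
  by (simp add: halfplane_def)

lemma of_real_mem_halfplane_iff [simp]: "complex_of_real t \<in> halfplane \<rho> \<longleftrightarrow> t > \<rho>"
  by (simp add: halfplane_def)

lemma lincomb_of_lincombs:
  fixes B :: "nat \<Rightarrow> 'a \<Rightarrow> 'b::comm_ring"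
  shows "\<exists>N c. (\<lambda>z. \<alpha> * (\<Sum>n\<in>{1..N1}. c1 n * B n z) + \<beta> * (\<Sum>n\<in>{1..N2}. c2 n * B n z))
    = (\<lambda>z. \<Sum>n\<in>{1..N}. c n * B n z)"
proof -
  define N where "N = max N1 N2"
  define c where "c n = \<alpha> * (if n \<le> N1 then c1 n else 0) + \<beta> * (if n \<le> N2 then c2 n else 0)" for n
  have pad: "(\<Sum>n\<in>{1..M}. d n * B n z) = (\<Sum>n\<in>{1..N}. (if n \<le> M then d n else 0) * B n z)"
    if "M \<le> N" for M d z
    using that by (intro sum.mono_neutral_cong_left) auto
  have pad1: "(\<Sum>n\<in>{1..N1}. c1 n * B n z) = (\<Sum>n\<in>{1..N}. (if n \<le> N1 then c1 n else 0) * B n z)"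
    and pad2: "(\<Sum>n\<in>{1..N2}. c2 n * B n z) = (\<Sum>n\<in>{1..N}. (if n \<le> N2 then c2 n else 0) * B n z)" for z
    by (rule pad, simp add: N_def)+
  have "\<alpha> * (\<Sum>n\<in>{1..N1}. c1 n * B n z) + \<beta> * (\<Sum>n\<in>{1..N2}. c2 n * B n z) = (\<Sum>n\<in>{1..N}. c n * B n z)"
    for z
    unfolding pad1 pad2
    by (simp add: N_def c_def sum_distrib_left sum.distrib distrib_right mult.assoc)
  thus ?thesis by (intro exI[of _ N] exI[of _ c]) (rule ext)
qed

locale dirichlet_rkhs =
  fixes \<rho> :: real and a :: "nat \<Rightarrow> nat \<Rightarrow> complex" and H :: "(complex \<Rightarrow> complex) set"
    and ip :: "(complex \<Rightarrow> complex) \<Rightarrow> (complex \<Rightarrow> complex) \<Rightarrow> complex"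
  assumes kernel: "dirichlet_series_kernel \<rho> a"
    and rkhs: "is_rkhs \<rho> (dkernel a) H ip"
begin

sublocale hilbert_fun_space \<rho> H ip
  using rkhs by unfold_locales (simp add: is_rkhs_def)

abbreviation "D \<equiv> halfplane \<rho>"
abbreviation "A \<equiv> analytic_symbol a"

definition K :: "complex \<Rightarrow> complex \<Rightarrow> complex" where "K t = restr \<rho> (\<lambda>s. dkernel a s t)"
definition Asym :: "nat \<Rightarrow> complex \<Rightarrow> complex" where "Asym n = restr \<rho> (A n)"

lemma kernel_regularly_convergent: "s \<in> D \<Longrightarrow> u \<in> D \<Longrightarrow> regularly_convergent a s u"
  using kernel by (simp add: dirichlet_series_kernel_def)

lemma K_mem: "t \<in> D \<Longrightarrow> K t \<in> H"
  and reproducing: "f \<in> H \<Longrightarrow> t \<in> D \<Longrightarrow> ip f (K t) = f t"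
  using rkhs by (simp_all add: is_rkhs_def K_def)

lemma K_apply: "s \<in> D \<Longrightarrow> K t s = dkernel a s t"
  and Asym_apply: "s \<in> D \<Longrightarrow> Asym n s = A n s"
  by (simp_all add: K_def Asym_def restr_def)

lemma kernel_sums_symbols:
  "s \<in> D \<Longrightarrow> u \<in> D \<Longrightarrow> (\<lambda>n. A (Suc n) s * dpow (Suc n) (cnj u)) sums dkernel a s u"
  unfolding dkernel_def analytic_symbol_def by (rule sums_double_sum_summing_m_first, rule kernel_regularly_convergent) auto

lemma kernel_sums_rows:
  "s \<in> D \<Longrightarrow> u \<in> D \<Longrightarrow>
     (\<lambda>m. (\<Sum>n. a (Suc m) (Suc n) * dpow (Suc n) (cnj u)) * dpow (Suc m) s) sums dkernel a s u"
  unfolding dkernel_def by (rule sums_double_sum_summing_n_first, rule kernel_regularly_convergent) auto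

lemma symbol_sums: "s \<in> D \<Longrightarrow> n \<ge> 1 \<Longrightarrow> (\<lambda>m. a (Suc m) n * dpow (Suc m) s) sums A n s"
  using kernel_regularly_convergent[of s s] by (simp add: regularly_convergent_def analytic_symbol_def summable_sums)

lemma row_sums: "u \<in> D \<Longrightarrow> m \<ge> 1 \<Longrightarrow>
    (\<lambda>n. a m (Suc n) * dpow (Suc n) u) sums (\<Sum>n. a m (Suc n) * dpow (Suc n) u)"
  using kernel_regularly_convergent[of u u] by (simp add: regularly_convergent_def summable_sums)

lemma dkernel_hermitian: "s \<in> D \<Longrightarrow> t \<in> D \<Longrightarrow> dkernel a s t = cnj (dkernel a t s)"
  using ip_swap[OF K_mem K_mem, of s t] reproducing[OF K_mem, of s t] reproducing[OF K_mem, of t s]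
  by (simp add: K_apply)

text \<open>The Hermitian symmetry of the kernel, read off twice by uniqueness of Dirichlet coefficients:
  first the row sums \<open>\<Sum>\<^sub>n a m n n\<^sup>-\<^sup>u\<close> against \<open>cnj (A m u)\<close>, then the entries.\<close>

lemma coeff_hermitian:
  assumes "m \<ge> 1" "k \<ge> 1"
  shows "a m k = cnj (a k m)"
proof -
  have row: "(\<Sum>n. a m (Suc n) * dpow (Suc n) (of_real u)) = cnj (A m (of_real u))"
    if "u > \<rho>" "m \<ge> 1" for u m
  proof (rule dirichlet_coeffs_unique[where \<sigma> = "\<rho> + 1"])
    fix t :: real assume "t \<ge> \<rho> + 1"
    hence t: "of_real t \<in> D" by simp
    show "(\<lambda>m. (\<Sum>n. a (Suc m) (Suc n) * dpow (Suc n) (of_real u)) * dpow (Suc m) (of_real t))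
        sums dkernel a (of_real t) (of_real u)"
      using kernel_sums_rows[OF t, of "of_real u"] that by simp
    have "(\<lambda>n. cnj (A (Suc n) (of_real u) * dpow (Suc n) (of_real t))) sums cnj (dkernel a (of_real u) (of_real t))"
      unfolding sums_cnj using kernel_sums_symbols[of "of_real u" "of_real t"] t that by simp
    thus "(\<lambda>m. cnj (A (Suc m) (of_real u)) * dpow (Suc m) (of_real t)) sums dkernel a (of_real t) (of_real u)"
      using dkernel_hermitian[OF t, of "of_real u"] that by simp
  qed (use that in auto)
  show ?thesis
  proof (rule dirichlet_coeffs_unique[where \<sigma> = "\<rho> + 1" and b = "\<lambda>k. a m k" and b' = "\<lambda>k. cnj (a k m)"])
    fix t :: real assume "t \<ge> \<rho> + 1"
    hence t: "of_real t \<in> D" by simp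
    show "(\<lambda>n. a m (Suc n) * dpow (Suc n) (of_real t)) sums (\<Sum>n. a m (Suc n) * dpow (Suc n) (of_real t))"
      by (rule row_sums[OF t \<open>m \<ge> 1\<close>])
    have "(\<lambda>n. cnj (a (Suc n) m * dpow (Suc n) (of_real t))) sums cnj (A m (of_real t))"
      using symbol_sums[OF t \<open>m \<ge> 1\<close>] by (simp only: sums_cnj)
    thus "(\<lambda>n. cnj (a (Suc n) m) * dpow (Suc n) (of_real t)) sums (\<Sum>n. a m (Suc n) * dpow (Suc n) (of_real t))"
      using row[of t m] \<open>t \<ge> \<rho> + 1\<close> \<open>m \<ge> 1\<close> by simp
  qed (use assms in auto)
qed

lemma coeff_bound: "\<exists>B. \<forall>m\<ge>1. \<forall>k\<ge>1. norm (a m k) \<le> B * real m powr (\<rho> + 1) * real k powr (\<rho> + 1)"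
  by (rule regularly_convergent_coeff_bound, rule kernel_regularly_convergent) (simp_all add: halfplane_def)

lemma coeff_tail_bound:
  obtains B where "\<And>n m q. m \<ge> 1 \<Longrightarrow> q \<ge> 1 \<Longrightarrow>
    norm (coeff_tail n (\<lambda>m. a m q) m) \<le> (B * real q powr (\<rho> + 1)) * real m powr (\<rho> + 1)"
proof -
  obtain B where B: "\<And>m k. m \<ge> 1 \<Longrightarrow> k \<ge> 1 \<Longrightarrow> norm (a m k) \<le> B * real m powr (\<rho> + 1) * real k powr (\<rho> + 1)"
    using coeff_bound by blast
  have "B \<ge> 0" using B[of 1 1] by simp (meson norm_ge_zero order_trans)
  show ?thesis
    by (rule that) (use B \<open>B \<ge> 0\<close> in \<open>auto simp: coeff_tail_def mult_ac\<close>)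
qed

definition t_seq :: "nat \<Rightarrow> real" where "t_seq j = \<rho> + 1 + real j"

lemma t_seq_gt: "t_seq j > \<rho>"
  by (simp add: t_seq_def)

lemma t_seq_at_top: "filterlim t_seq at_top sequentially"
  unfolding t_seq_def by (intro filterlim_tendsto_add_at_top[OF tendsto_const] filterlim_real_sequentially)

text \<open>By \<open>X_apply\<close>, \<open>X n j = n\<^sup>t \<Sum>\<^sub>k\<^sub>\<ge>\<^sub>n A\<^sub>k k\<^sup>-\<^sup>t\<close> at \<open>t = t_seq j\<close>, which tends to
  \<open>A\<^sub>n\<close>; the subtracted head keeps \<open>X n j\<close> in \<open>H\<close> once \<open>A\<^sub>1, \<dots>, A\<^sub>n\<^sub>-\<^sub>1 \<in> H\<close>.
  \<open>R n q t\<close> is the corresponding tail of the column \<open>q\<close> of the coefficient matrix; it equals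
  \<open>\<langle>A\<^sub>q, X n j\<rangle>\<close> (\<open>ip_symbol_X\<close>).\<close>

definition X :: "nat \<Rightarrow> nat \<Rightarrow> complex \<Rightarrow> complex" where
  "X n j = (\<lambda>z. of_real (real n powr t_seq j) *
     (K (of_real (t_seq j)) z - (\<Sum>l\<in>{1..<n}. dpow l (of_real (t_seq j)) * Asym l z)))"

definition R :: "nat \<Rightarrow> nat \<Rightarrow> real \<Rightarrow> complex" where
  "R n q t = of_real (real n powr t) * dirichlet_series (coeff_tail n (\<lambda>m. a m q)) (of_real t)"

lemma X_mem: "(\<And>l. 1 \<le> l \<Longrightarrow> l < n \<Longrightarrow> Asym l \<in> H) \<Longrightarrow> X n j \<in> H"
  unfolding X_def by (intro scale_mem diff_mem K_mem lincomb_mem) (auto simp: t_seq_gt)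

lemma tail_symbols_sums:
  assumes z: "z \<in> D" and t: "t > \<rho>"
  shows "(\<lambda>k. coeff_tail n (\<lambda>k. A k z) (Suc k) * dpow (Suc k) (of_real t)) sums
           (K (of_real t) z - (\<Sum>l\<in>{1..<n}. dpow l (of_real t) * Asym l z))"
  using sums_coeff_tail[OF kernel_sums_symbols[OF z, of "of_real t"], of n] z t
  by (simp add: coeff_tail_mult K_apply Asym_apply mult.commute)

lemma X_apply:
  "z \<in> D \<Longrightarrow> X n j z = of_real (real n powr t_seq j) * dirichlet_series (coeff_tail n (\<lambda>k. A k z)) (of_real (t_seq j))"
  using sums_unique[OF tail_symbols_sums[OF _ t_seq_gt]] by (simp add: X_def dirichlet_series_def)

lemma X_tendsto_symbol:
  assumes z: "z \<in> D" and n: "n \<ge> 1"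
  shows "(\<lambda>j. X n j z) \<longlonglongrightarrow> A n z"
proof -
  obtain B where B: "\<forall>m\<ge>1. norm (coeff_tail n (\<lambda>k. A k z) m) \<le> B * real m powr (\<rho> + 1)"
    using summable_imp_coeff_bound sums_summable[OF tail_symbols_sums[OF z, of "\<rho> + 1"]] by force
  have "(\<lambda>j. of_real (real n powr t_seq j) * dirichlet_series (coeff_tail n (\<lambda>k. A k z)) (of_real (t_seq j)))
      \<longlonglongrightarrow> coeff_tail n (\<lambda>k. A k z) n"
    by (rule dirichlet_leading_coeff_tendsto[OF _ n _ _ _ t_seq_at_top]) (use B in \<open>auto simp: coeff_tail_def\<close>)
  thus ?thesis using z by (simp add: X_apply coeff_tail_def)
qed

lemma R_eq:
  assumes "q \<ge> 1" "t > \<rho>"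
  shows "R n q t = of_real (real n powr t) * (A q (of_real t) - (\<Sum>l\<in>{1..<n}. a l q * dpow l (of_real t)))"
  using sums_unique[OF sums_coeff_tail[OF symbol_sums[of "of_real t" q], of n]] assms
  by (simp add: R_def dirichlet_series_def coeff_tail_mult)

lemma R_tendsto:
  assumes n: "n \<ge> 1" and q: "q \<ge> 1"
  shows "(\<lambda>j. R n q (t_seq j)) \<longlonglongrightarrow> a n q"
proof -
  obtain B where B: "\<And>m. m \<ge> 1 \<Longrightarrow>
      norm (coeff_tail n (\<lambda>m. a m q) m) \<le> (B * real q powr (\<rho> + 1)) * real m powr (\<rho> + 1)"
    using coeff_tail_bound q by metis
  have "(\<lambda>j. R n q (t_seq j)) \<longlonglongrightarrow> coeff_tail n (\<lambda>m. a m q) n"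
    unfolding R_def
    by (rule dirichlet_leading_coeff_tendsto[where B = "B * real q powr (\<rho> + 1)" and r = "\<rho> + 1",
          OF _ n _ _ _ t_seq_at_top]) (use B in \<open>auto simp: coeff_tail_def\<close>)
  thus ?thesis by (simp add: coeff_tail_def)
qed

lemma R_bound:
  assumes n: "n \<ge> 1"
  obtains B where "\<And>q t. q \<ge> 1 \<Longrightarrow> t \<ge> \<rho> + 3 \<Longrightarrow> norm (R n q t) \<le> B * real q powr (\<rho> + 1)"
proof -
  obtain B where B: "\<And>m q. m \<ge> 1 \<Longrightarrow> q \<ge> 1 \<Longrightarrow>
      norm (coeff_tail n (\<lambda>m. a m q) m) \<le> (B * real q powr (\<rho> + 1)) * real m powr (\<rho> + 1)"
    using coeff_tail_bound by metis
  define Z where "Z = (\<Sum>k. real (Suc k) powr (-2))"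
  show ?thesis
  proof (rule that)
    fix q :: nat and t :: real assume q: "q \<ge> 1" and t: "t \<ge> \<rho> + 3"
    have "norm (R n q t) \<le> (B * real q powr (\<rho> + 1)) * real n powr (\<rho> + 1 + 2) * Z"
      unfolding R_def Z_def
      by (rule dirichlet_tail_bound(2)[OF B[OF _ q] n]) (use t in \<open>auto simp: coeff_tail_def\<close>)
    thus "norm (R n q t) \<le> (B * real n powr (\<rho> + 1 + 2) * Z) * real q powr (\<rho> + 1)"
      by (simp add: mult_ac)
  qed
qed

lemma tail_row_sums_cnj_tail_column:
  assumes l: "l \<ge> 1" and t: "t > \<rho>"
  shows "(\<lambda>k. coeff_tail n (\<lambda>q. a l q) (Suc k) * dpow (Suc k) (of_real t)) sums
           cnj (dirichlet_series (coeff_tail n (\<lambda>m. a m l)) (of_real t))"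
proof -
  have "(\<lambda>k. coeff_tail n (\<lambda>m. a m l) (Suc k) * dpow (Suc k) (of_real t)) sums
      dirichlet_series (coeff_tail n (\<lambda>m. a m l)) (of_real t)"
    using sums_coeff_tail[OF symbol_sums[of "of_real t" l], of n] l t
    by (simp add: coeff_tail_mult dirichlet_series_def sums_iff)
  hence "(\<lambda>k. cnj (coeff_tail n (\<lambda>m. a m l) (Suc k) * dpow (Suc k) (of_real t))) sums
      cnj (dirichlet_series (coeff_tail n (\<lambda>m. a m l)) (of_real t))"
    by (simp only: sums_cnj)
  moreover have "cnj (coeff_tail n (\<lambda>m. a m l) (Suc k)) = coeff_tail n (\<lambda>q. a l q) (Suc k)" for k
    using coeff_hermitian[of l "Suc k"] l by (simp add: coeff_tail_def)
  ultimately show ?thesis by simp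
qed

context
  fixes n :: nat
  assumes n: "n \<ge> 1"
    and lower_mem: "\<And>l. 1 \<le> l \<Longrightarrow> l < n \<Longrightarrow> Asym l \<in> H"
    and lower_gram: "\<And>l l'. 1 \<le> l \<Longrightarrow> l < n \<Longrightarrow> 1 \<le> l' \<Longrightarrow> l' < n \<Longrightarrow> ip (Asym l) (Asym l') = a l' l"
begin

lemma ip_X_right:
  assumes g: "g \<in> H"
  shows "ip g (X n j) = of_real (real n powr t_seq j) *
    (g (of_real (t_seq j)) - (\<Sum>l\<in>{1..<n}. dpow l (of_real (t_seq j)) * ip g (Asym l)))"
proof -
  let ?t = "complex_of_real (t_seq j)"
  have t: "?t \<in> D" by (simp add: t_seq_gt)
  have S: "(\<lambda>z. \<Sum>l\<in>{1..<n}. dpow l ?t * Asym l z) \<in> H" by (intro lincomb_mem lower_mem) auto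
  have "ip g (X n j) = cnj (of_real (real n powr t_seq j)) * ip g (\<lambda>z. K ?t z - (\<Sum>l\<in>{1..<n}. dpow l ?t * Asym l z))"
    unfolding X_def by (rule ip_scale_right[OF g diff_mem[OF K_mem[OF t] S]])
  also have "ip g (\<lambda>z. K ?t z - (\<Sum>l\<in>{1..<n}. dpow l ?t * Asym l z))
      = ip g (K ?t) - ip g (\<lambda>z. \<Sum>l\<in>{1..<n}. dpow l ?t * Asym l z)"
    by (rule ip_diff_right[OF K_mem[OF t] S g])
  also have "ip g (\<lambda>z. \<Sum>l\<in>{1..<n}. dpow l ?t * Asym l z) = (\<Sum>l\<in>{1..<n}. dpow l ?t * ip g (Asym l))"
    using ip_sum_right[of "{1..<n}" Asym g "\<lambda>l. dpow l ?t"] lower_mem g by simp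
  finally show ?thesis by (simp add: reproducing[OF g t])
qed

lemma ip_symbol_X:
  assumes q: "q \<ge> 1" "Asym q \<in> H" and gram: "\<And>l. 1 \<le> l \<Longrightarrow> l < n \<Longrightarrow> ip (Asym q) (Asym l) = a l q"
  shows "ip (Asym q) (X n j) = R n q (t_seq j)"
proof -
  have "(\<Sum>l\<in>{1..<n}. dpow l (of_real (t_seq j)) * ip (Asym q) (Asym l))
      = (\<Sum>l\<in>{1..<n}. a l q * dpow l (of_real (t_seq j)))"
    by (intro sum.cong) (auto simp: gram)
  thus ?thesis using q by (simp add: ip_X_right Asym_apply t_seq_gt R_eq)
qed

lemma ip_X_symbol:
  assumes "1 \<le> l" "l < n"
  shows "ip (X n i) (Asym l) = of_real (real n powr t_seq i) *
    cnj (dirichlet_series (coeff_tail n (\<lambda>m. a m l)) (of_real (t_seq i)))"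
  using ip_swap[OF lower_mem X_mem, of l n i] ip_symbol_X[of l i] assms lower_mem lower_gram
  by (simp add: R_def)

lemma ip_X_X:
  "ip (X n i) (X n j) = of_real (real n powr t_seq i) *
     dirichlet_series (coeff_tail n (\<lambda>q. R n q (t_seq j))) (of_real (t_seq i))"
proof -
  let ?ti = "complex_of_real (t_seq i)" and ?tj = "complex_of_real (t_seq j)"
  let ?ci = "complex_of_real (real n powr t_seq i)" and ?cj = "complex_of_real (real n powr t_seq j)"
  define KS where "KS = K ?ti ?tj - (\<Sum>l\<in>{1..<n}. dpow l ?ti * Asym l ?tj)"
  define C where "C l = cnj (dirichlet_series (coeff_tail n (\<lambda>m. a m l)) ?ti)" for l
  have "ip (X n i) (X n j) = ?cj * (X n i ?tj - (\<Sum>l\<in>{1..<n}. dpow l ?tj * ip (X n i) (Asym l)))"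
    by (rule ip_X_right[OF X_mem[OF lower_mem]])
  also have "X n i ?tj = ?ci * KS" by (simp add: X_def KS_def)
  also have "(\<Sum>l\<in>{1..<n}. dpow l ?tj * ip (X n i) (Asym l)) = ?ci * (\<Sum>l\<in>{1..<n}. dpow l ?tj * C l)"
    unfolding sum_distrib_left by (intro sum.cong) (auto simp: ip_X_symbol C_def)
  finally have ip: "ip (X n i) (X n j) = ?ci * (?cj * (KS - (\<Sum>l\<in>{1..<n}. dpow l ?tj * C l)))"
    by (simp add: algebra_simps)
  have "(\<lambda>k. ?cj * (coeff_tail n (\<lambda>k. A k ?tj) (Suc k) * dpow (Suc k) ?ti
        - (\<Sum>l\<in>{1..<n}. dpow l ?tj * (coeff_tail n (\<lambda>q. a l q) (Suc k) * dpow (Suc k) ?ti))))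
      sums (?cj * (KS - (\<Sum>l\<in>{1..<n}. dpow l ?tj * C l)))"
    unfolding KS_def C_def
    by (intro sums_mult sums_diff sums_sum tail_symbols_sums tail_row_sums_cnj_tail_column)
       (auto simp: t_seq_gt)
  moreover have "?cj * (coeff_tail n (\<lambda>k. A k ?tj) (Suc k) * dpow (Suc k) ?ti
        - (\<Sum>l\<in>{1..<n}. dpow l ?tj * (coeff_tail n (\<lambda>q. a l q) (Suc k) * dpow (Suc k) ?ti)))
      = coeff_tail n (\<lambda>q. R n q (t_seq j)) (Suc k) * dpow (Suc k) ?ti" for k
    by (cases "Suc k < n")
       (simp_all add: coeff_tail_def R_eq t_seq_gt sum_distrib_left sum_distrib_right algebra_simps)
  ultimately have "dirichlet_series (coeff_tail n (\<lambda>q. R n q (t_seq j))) ?ti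
      = ?cj * (KS - (\<Sum>l\<in>{1..<n}. dpow l ?tj * C l))"
    by (simp add: dirichlet_series_def sums_iff)
  thus ?thesis using ip by simp
qed

lemma ip_X_X_tendsto: "((\<lambda>(i, j). ip (X n i) (X n j)) \<longlongrightarrow> a n n) (sequentially \<times>\<^sub>F sequentially)"
proof -
  let ?F = "sequentially \<times>\<^sub>F sequentially :: (nat \<times> nat) filter"
  obtain B where B: "\<And>q t. q \<ge> 1 \<Longrightarrow> t \<ge> \<rho> + 3 \<Longrightarrow> norm (R n q t) \<le> B * real q powr (\<rho> + 1)"
    using R_bound[OF n] by blast
  have "B \<ge> 0" using B[of 1 "\<rho> + 3"] by simp (meson norm_ge_zero order_trans)
  have "filterlim (\<lambda>p. t_seq (snd p)) at_top ?F"
    by (rule filterlim_compose[OF t_seq_at_top filterlim_snd])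
  hence "eventually (\<lambda>p. t_seq (snd p) \<ge> \<rho> + 3) ?F" by (simp add: filterlim_at_top)
  hence bound: "eventually (\<lambda>p. \<forall>q\<ge>1. norm (coeff_tail n (\<lambda>q. R n q (t_seq (snd p))) q)
      \<le> B * real q powr (\<rho> + 1)) ?F"
    by eventually_elim (use B \<open>B \<ge> 0\<close> in \<open>auto simp: coeff_tail_def\<close>)
  have "((\<lambda>p. of_real (real n powr t_seq (fst p)) *
      dirichlet_series (coeff_tail n (\<lambda>q. R n q (t_seq (snd p)))) (of_real (t_seq (fst p))))
      \<longlongrightarrow> a n n) ?F"
  proof (rule dirichlet_leading_coeff_tendsto[OF _ n bound])
    show "((\<lambda>p. coeff_tail n (\<lambda>q. R n q (t_seq (snd p))) n) \<longlongrightarrow> a n n) ?F"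
      using filterlim_compose[OF R_tendsto[OF n n] filterlim_snd] by (simp add: coeff_tail_def)
    show "filterlim (\<lambda>p. t_seq (fst p)) at_top ?F"
      by (rule filterlim_compose[OF t_seq_at_top filterlim_fst])
  qed (auto simp: coeff_tail_def prod_filter_eq_bot)
  thus ?thesis by (simp add: ip_X_X case_prod_beta')
qed

lemma X_tendsto_Asym: "Asym n \<in> H" "(\<lambda>j. hnorm ip (\<lambda>s. X n j s - Asym n s)) \<longlonglongrightarrow> 0"
proof -
  have XH: "X n j \<in> H" for j by (rule X_mem[OF lower_mem])
  obtain g where g: "g \<in> H" and lim: "(\<lambda>j. hnorm ip (\<lambda>s. X n j s - g s)) \<longlonglongrightarrow> 0"
    using convergent_if_gram_tendsto[OF XH ip_X_X_tendsto] by blast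
  have "g z = Asym n z" for z
  proof (cases "z \<in> D")
    case True
    have "(\<lambda>j. ip (X n j) (K z)) \<longlonglongrightarrow> ip g (K z)"
      by (rule ip_tendsto_left[OF XH g K_mem[OF True] lim])
    hence "(\<lambda>j. X n j z) \<longlonglongrightarrow> g z" by (simp add: reproducing XH g True)
    with X_tendsto_symbol[OF True n] show ?thesis by (simp add: Asym_apply True LIMSEQ_unique)
  qed (simp add: vanishes_outside[OF g] Asym_def restr_def)
  hence "g = Asym n" by blast
  with g lim show "Asym n \<in> H" "(\<lambda>j. hnorm ip (\<lambda>s. X n j s - Asym n s)) \<longlonglongrightarrow> 0" by simp_all
qed

lemma symbol_gram_step: "1 \<le> l \<Longrightarrow> l \<le> n \<Longrightarrow> ip (Asym l) (Asym n) = a n l"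
proof -
  have XH: "X n j \<in> H" for j by (rule X_mem[OF lower_mem])
  have lim: "(\<lambda>j. ip g (X n j)) \<longlonglongrightarrow> ip g (Asym n)" if "g \<in> H" for g
    by (rule ip_tendsto_right[OF XH X_tendsto_Asym(1) that X_tendsto_Asym(2)])
  have lower: "ip (Asym l) (Asym n) = a n l" if l: "1 \<le> l" "l < n" for l
  proof -
    have "(\<lambda>j. ip (Asym l) (X n j)) \<longlonglongrightarrow> a n l"
      using R_tendsto[OF n l(1)] l by (simp add: ip_symbol_X lower_mem lower_gram)
    thus ?thesis using lim[OF lower_mem[OF l]] LIMSEQ_unique by blast
  qed
  have "(\<lambda>j. ip (Asym n) (X n j)) \<longlonglongrightarrow> a n n"
  proof -
    have "ip (Asym n) (Asym l) = a l n" if l: "1 \<le> l" "l < n" for l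
      using ip_swap[OF lower_mem[OF l] X_tendsto_Asym(1)] lower[OF l] coeff_hermitian[of l n] l n
      by simp
    thus ?thesis using R_tendsto[OF n n] n by (simp add: ip_symbol_X X_tendsto_Asym(1))
  qed
  hence "ip (Asym n) (Asym n) = a n n" using lim[OF X_tendsto_Asym(1)] LIMSEQ_unique by blast
  thus "1 \<le> l \<Longrightarrow> l \<le> n \<Longrightarrow> ip (Asym l) (Asym n) = a n l" using lower by (cases "l = n") auto
qed

end

lemma symbols_mem_gram: "n \<ge> 1 \<Longrightarrow> Asym n \<in> H \<and> (\<forall>l. 1 \<le> l \<longrightarrow> l \<le> n \<longrightarrow> ip (Asym l) (Asym n) = a n l)"
proof (induction n rule: less_induct)
  case (less n)
  have mem: "Asym l \<in> H" if "1 \<le> l" "l < n" for l using less.IH that by blast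
  have gram: "ip (Asym l) (Asym l') = a l' l" if l: "1 \<le> l" "l < n" "1 \<le> l'" "l' < n" for l l'
  proof (cases "l \<le> l'")
    case False
    hence "ip (Asym l') (Asym l) = a l l'" using less.IH[of l] l by auto
    thus ?thesis using ip_swap[OF mem mem, of l' l] coeff_hermitian[of l' l] l by simp
  qed (use less.IH l in auto)
  show ?case using X_tendsto_Asym(1)[OF less.prems mem gram] symbol_gram_step[OF less.prems mem gram] by blast
qed

lemma Asym_mem: "n \<ge> 1 \<Longrightarrow> Asym n \<in> H"
  using symbols_mem_gram by blast

lemma ip_Asym_Asym:
  assumes "l \<ge> 1" "n \<ge> 1"
  shows "ip (Asym l) (Asym n) = a n l"
proof (cases "l \<le> n")
  case False
  hence "ip (Asym n) (Asym l) = a l n" using symbols_mem_gram[of l] assms by auto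
  thus ?thesis using ip_swap[OF Asym_mem Asym_mem, of n l] coeff_hermitian[of n l] assms by simp
qed (use symbols_mem_gram[of n] assms in auto)

lemma ip_symbol_partial_sum_self:
  assumes s: "s \<in> D"
  shows "ip (\<lambda>z. \<Sum>n\<in>{1..N}. dpow n (cnj s) * Asym n z) (\<lambda>z. \<Sum>n\<in>{1..N}. dpow n (cnj s) * Asym n z)
    = dpsum a s (cnj s) (N, N)"
proof -
  let ?P = "\<lambda>z. \<Sum>n\<in>{1..N}. dpow n (cnj s) * Asym n z"
  have "ip ?P ?P = (\<Sum>n\<in>{1..N}. dpow n (cnj s) * ip (Asym n) ?P)"
    using Asym_mem by (intro ip_sum_left lincomb_mem) auto
  also have "\<dots> = (\<Sum>n\<in>{1..N}. \<Sum>k\<in>{1..N}. dpow n (cnj s) * dpow k s * ip (Asym n) (Asym k))"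
  proof (intro sum.cong refl)
    fix n assume "n \<in> {1..N}"
    thus "dpow n (cnj s) * ip (Asym n) ?P = (\<Sum>k\<in>{1..N}. dpow n (cnj s) * dpow k s * ip (Asym n) (Asym k))"
      using ip_sum_right[of "{1..N}" Asym "Asym n" "\<lambda>k. dpow k (cnj s)"] Asym_mem
      by (simp add: cnj_dpow sum_distrib_left mult_ac)
  qed
  also have "\<dots> = (\<Sum>n\<in>{1..N}. \<Sum>k\<in>{1..N}. a k n * dpow k s * dpow n (cnj s))"
    by (intro sum.cong refl) (auto simp: ip_Asym_Asym)
  also have "\<dots> = dpsum a s (cnj s) (N, N)"
    unfolding dpsum_def by (simp only: prod.case) (rule sum.swap)
  finally show ?thesis .
qed

lemma symbol_expansion:
  assumes f: "f \<in> H" and s: "s \<in> D"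
  shows "(\<lambda>n. ip f (Asym (Suc n)) * dpow (Suc n) s) sums f s"
proof -
  define P where "P N = (\<lambda>z. \<Sum>n\<in>{1..N}. dpow n (cnj s) * Asym n z)" for N
  have PH: "P N \<in> H" for N unfolding P_def by (intro lincomb_mem Asym_mem) auto
  have KH: "K s \<in> H" by (rule K_mem[OF s])
  have KK: "ip (K s) (K s) = dkernel a s s" by (simp add: reproducing KH s K_apply)
  have "ip (P N) (K s) = (\<Sum>n\<in>{1..N}. dpow n (cnj s) * ip (Asym n) (K s))" for N
    unfolding P_def by (intro ip_sum_left Asym_mem KH) auto
  also have "\<dots> N = (\<Sum>n<N. A (Suc n) s * dpow (Suc n) (cnj s))" for N
    by (simp add: reproducing[OF Asym_mem s] Asym_apply[OF s] sum.atLeast1_atMost_eq mult.commute)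
  finally have "(\<lambda>N. ip (P N) (K s)) \<longlonglongrightarrow> ip (K s) (K s)"
    using kernel_sums_symbols[OF s s] unfolding KK sums_def by simp
  moreover have "(\<lambda>N. ip (P N) (P N)) \<longlonglongrightarrow> ip (K s) (K s)"
    unfolding P_def ip_symbol_partial_sum_self[OF s] KK dkernel_def
    using filterlim_compose[OF double_sum_tendsto filterlim_Pair[OF filterlim_ident filterlim_ident]]
      kernel_regularly_convergent[OF s, of "cnj s"] s
    by (simp add: regularly_convergent_def)
  ultimately have "(\<lambda>N. hnorm ip (\<lambda>z. P N z - K s z)) \<longlonglongrightarrow> 0"
    by (rule hnorm_diff_tendsto_0I[OF PH KH, rotated])
  hence "(\<lambda>N. ip f (P N)) \<longlonglongrightarrow> f s"
    using ip_tendsto_right[OF PH KH f] reproducing[OF f s] by simp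
  moreover have "ip f (P N) = (\<Sum>n<N. ip f (Asym (Suc n)) * dpow (Suc n) s)" for N
    unfolding P_def
    by (simp add: ip_sum_right[OF _ Asym_mem f] cnj_dpow sum.atLeast1_atMost_eq mult.commute)
  ultimately show ?thesis by (simp add: sums_def)
qed

lemma symbols_total: "total_family H ip Asym"
proof -
  define S where "S = {g. \<exists>N c. g = (\<lambda>z. \<Sum>n\<in>{1..N}. c n * Asym n z)}"
  have "\<exists>g\<in>S. hnorm ip (\<lambda>s. f s - g s) < e" if f: "f \<in> H" and e: "e > 0" for f e
  proof (rule dense_if_orthogonal_complement_trivial[OF _ _ _ _ f e])
    show "S \<subseteq> H" by (auto simp: S_def intro!: lincomb_mem Asym_mem)
    show "(\<lambda>s. 0) \<in> S" unfolding S_def by (intro CollectI exI[of _ 0]) simp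
    show "(\<lambda>z. \<alpha> * g z + \<beta> * g' z) \<in> S" if "g \<in> S" "g' \<in> S" for g g' \<alpha> \<beta>
      using that lincomb_of_lincombs[where B = Asym and \<alpha> = \<alpha> and \<beta> = \<beta>] unfolding S_def by blast
    fix h assume h: "h \<in> H" and orth: "\<forall>u\<in>S. ip h u = 0"
    have "ip h (Asym n) = 0" if "n \<ge> 1" for n
    proof -
      have "(\<Sum>m\<in>{1..n}. (if m = n then 1 else 0) * Asym m z) = Asym n z" for z
        using that by (simp add: if_distrib[of "\<lambda>c. c * _"] cong: if_cong)
      hence "(\<lambda>z. \<Sum>m\<in>{1..n}. (if m = n then 1 else 0) * Asym m z) = Asym n" by blast
      hence "Asym n \<in> S"
        unfolding S_def by (intro CollectI exI) (rule sym)
      thus ?thesis using orth by blast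
    qed
    hence "(\<lambda>k. 0) sums h s" if "s \<in> D" for s
      using symbol_expansion[OF h that] by simp
    thus "h = (\<lambda>s. 0)"
      using vanishes_outside[OF h] sums_unique2[OF sums_zero] by (metis ext)
  qed
  thus ?thesis unfolding total_family_def S_def using Asym_mem by blast
qed

end

theorem theorem2p9:
  fixes \<rho> :: real and a :: "nat \<Rightarrow> nat \<Rightarrow> complex"
    and H :: "(complex \<Rightarrow> complex) set"
    and ip :: "(complex \<Rightarrow> complex) \<Rightarrow> (complex \<Rightarrow> complex) \<Rightarrow> complex"
  assumes kernel: "dirichlet_series_kernel \<rho> a"
    and psd: "psd_kernel (halfplane \<rho>) (dkernel a)"
    and rkhs: "is_rkhs \<rho> (dkernel a) H ip"
  shows "(\<forall>s\<in>halfplane \<rho>. \<forall>u\<in>halfplane \<rho>.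
            (\<lambda>n. analytic_symbol a (Suc n) s * dpow (Suc n) (cnj u)) sums dkernel a s u)
       \<and> (\<forall>f\<in>H. \<forall>s\<in>halfplane \<rho>.
            (\<lambda>n. ip f (restr \<rho> (analytic_symbol a (Suc n))) * dpow (Suc n) s) sums f s)
       \<and> total_family H ip (\<lambda>n. restr \<rho> (analytic_symbol a n))"
proof -
  interpret dirichlet_rkhs \<rho> a H ip
    using kernel rkhs by unfold_locales
  show ?thesis
    using kernel_sums_symbols symbol_expansion symbols_total
    unfolding Asym_def[abs_def] by blast
qed

end
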